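(* Under the standing setup, there exists a polynomial $p_4(x)$ such that for all sufficiently large $n$ and all $1\le j\le 2\ell$, $$\mu\otimes\mu\bigl(Q^j_{n,k}\bigr)\le p_4(n)^{k/n}e^{-2n(h(\mu)-\delta)}\gamma^{2\ell-j}.$$
   Context: Standing setup. $\mathcal{A}$ is a finite alphabet, $X\subset\mathcal{A}^{\mathbb{Z}}$ a non-trivial topologically mixing SFT with left shift $\sigma$, $f:X\to\mathbb{R}$ H\"older continuous with pressure $P=P_X(f)$, and $\mu$ the Gibbs measure (unique equilibrium state) of $f$, with entropy $h(\mu)$. $B_m(X)$ is the set of words of length $m$ in $X$; $[w]=\{x\in X:x_0\dots x_{|w|-1}=w\}$, $\mu(w)=\mu([w])$, and $\mu\otimes\mu(S)=\sum_{(u,v)\in S}\mu(u)\mu(v)$. Words are written $u=u_1\dots u_k$, $u_i^j=u_i\dots u_j$. $K>1$ is a constant such that: (i) for all $m\ge1$, $x\in X$: $K^{-1}\le\mu(x_0\dots x_{m-1})/\exp(-Pm+\sum_{i=0}^{m-1}f(\sigma^ix))\le K$; (ii) $\mu(uv)\le K\mu(u)\mu(v)$ and $\mu(\sigma^{-|u|}[v]\mid[u])\le K\mu(v)$ whenever $uv\in B(X)$. $\gamma_0=\inf\{\gamma>0:\exists n_0\ \forall m\ge n_0\ \forall u\in B_m(X),\ \mu(u)\le\gamma^m\}$. Parameters: $\alpha\in(\gamma_0,1]$; $\gamma\in(\gamma_0,\alpha)$; $n_0$ such that $\mu(u)\le\gamma^{|u|}$ for all $u\in B(X)$ with $|u|\ge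 n_0$; $n\ge n_0$; $0<\delta<\frac14\log(\alpha/\gamma)$; $k=k(n)$ with $n/k\to0$ and $k=o(n^2/\log n)$; $\ell=k-n+1$. For a word $u$ of length $\ge n$, $W_n(u)$ is the set of distinct subwords of $u$ of length $n$. $E_n=\{u\in B_n(X):|-\frac1n\log\mu(u)-h(\mu)|<\delta\}$, $G_{n,k}=\{u\in B_k(X): u_1^n=u_\ell^k\text{ and }u_1^n\in E_n\}$, $Q_{n,k}=\{(u,v)\in G_{n,k}\times G_{n,k}: W_n(u)\cap W_n(v)\neq\emptyset\}$, and $Q^j_{n,k}=\{(u,v)\in Q_{n,k}:|W_n(u)\cup W_n(v)|=j\}$. *)

theory Defs
  imports "HOL-Probability.Probability" "HOL-Computational_Algebra.Polynomial"
    "HOL-Library.Landau_Symbols"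
begin

definition shift :: "(int \<Rightarrow> 'a) \<Rightarrow> (int \<Rightarrow> 'a)" where
  "shift x = (\<lambda>i. x (i + 1))"

definition word_at :: "(int \<Rightarrow> 'a) \<Rightarrow> int \<Rightarrow> nat \<Rightarrow> 'a list" where
  "word_at x i m = map (\<lambda>j. x (i + int j)) [0..<m]"

definition is_sft :: "(int \<Rightarrow> 'a::finite) set \<Rightarrow> bool" where
  "is_sft X \<longleftrightarrow> (\<exists>F :: 'a list set. finite F \<and>
      X = {x. \<forall>i. \<forall>w\<in>F. word_at x i (length w) \<noteq> w})"

definition lang :: "(int \<Rightarrow> 'a) set \<Rightarrow> nat \<Rightarrow> 'a list set" where
  "lang X m = {w. \<exists>x\<in>X. word_at x 0 m = w}"

definition lang_all :: "(int \<Rightarrow> 'a) set \<Rightarrow> 'a list set" where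
  "lang_all X = (\<Union>m. lang X m)"

text \<open>Topological mixing, written out on the cylinder base of the product topology.\<close>
definition topologically_mixing :: "(int \<Rightarrow> 'a) set \<Rightarrow> bool" where
  "topologically_mixing X \<longleftrightarrow> (\<forall>u\<in>lang_all X. \<forall>v\<in>lang_all X. \<exists>N. \<forall>n\<ge>N.
      \<exists>x\<in>X. word_at x 0 (length u) = u \<and> word_at x (int (length u + n)) (length v) = v)"

definition shift_dist :: "(int \<Rightarrow> 'a) \<Rightarrow> (int \<Rightarrow> 'a) \<Rightarrow> real" where
  "shift_dist x y = (if x = y then 0
     else (1/2) ^ (LEAST m::nat. \<exists>i. \<bar>i\<bar> = int m \<and> x i \<noteq> y i))"

definition holder :: "(int \<Rightarrow> 'a) set \<Rightarrow> ((int \<Rightarrow> 'a) \<Rightarrow> real) \<Rightarrow> bool" where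
  "holder X f \<longleftrightarrow> (\<exists>C a. a > 0 \<and>
      (\<forall>x\<in>X. \<forall>y\<in>X. \<bar>f x - f y\<bar> \<le> C * shift_dist x y powr a))"

definition cyl :: "(int \<Rightarrow> 'a) set \<Rightarrow> 'a list \<Rightarrow> (int \<Rightarrow> 'a) set" where
  "cyl X w = {x\<in>X. word_at x 0 (length w) = w}"

definition cyl_at :: "(int \<Rightarrow> 'a) set \<Rightarrow> int \<Rightarrow> 'a list \<Rightarrow> (int \<Rightarrow> 'a) set" where
  "cyl_at X i w = {x\<in>X. word_at x i (length w) = w}"

definition cyl_sets :: "(int \<Rightarrow> 'a) set \<Rightarrow> (int \<Rightarrow> 'a) set set" where
  "cyl_sets X = {cyl_at X i w | i w. True}"

definition birkhoff :: "((int \<Rightarrow> 'a) \<Rightarrow> real) \<Rightarrow> nat \<Rightarrow> (int \<Rightarrow> 'a) \<Rightarrow> real" where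
  "birkhoff f m x = (\<Sum>i<m. f ((shift ^^ i) x))"

definition pressure :: "(int \<Rightarrow> 'a) set \<Rightarrow> ((int \<Rightarrow> 'a) \<Rightarrow> real) \<Rightarrow> real" where
  "pressure X f = lim (\<lambda>m. ln (\<Sum>w\<in>lang X m. exp (Sup (birkhoff f m ` cyl X w))) / real m)"

definition cp :: "(int \<Rightarrow> 'a) measure \<Rightarrow> (int \<Rightarrow> 'a) set \<Rightarrow> 'a list \<Rightarrow> real" where
  "cp \<mu> X w = measure \<mu> (cyl X w)"

text \<open>Shift-invariant Borel probability measure on X (Borel sets = sigma-algebra of cylinders).\<close>
definition shift_invariant_prob :: "(int \<Rightarrow> 'a) set \<Rightarrow> (int \<Rightarrow> 'a) measure \<Rightarrow> bool" where
  "shift_invariant_prob X \<mu> \<longleftrightarrow> prob_space \<mu> \<and> space \<mu> = X \<and>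
     sets \<mu> = sigma_sets X (cyl_sets X) \<and>
     (\<forall>A\<in>sets \<mu>. emeasure \<mu> {x\<in>X. shift x \<in> A} = emeasure \<mu> A)"

definition gibbs_measure :: "(int \<Rightarrow> 'a) set \<Rightarrow> ((int \<Rightarrow> 'a) \<Rightarrow> real) \<Rightarrow> (int \<Rightarrow> 'a) measure \<Rightarrow> bool" where
  "gibbs_measure X f \<mu> \<longleftrightarrow> shift_invariant_prob X \<mu> \<and>
     (\<exists>K>0. \<forall>m\<ge>1. \<forall>x\<in>X.
        inverse K \<le> cp \<mu> X (word_at x 0 m) / exp (- pressure X f * real m + birkhoff f m x) \<and>
        cp \<mu> X (word_at x 0 m) / exp (- pressure X f * real m + birkhoff f m x) \<le> K)"

text \<open>Measure-theoretic (Kolmogorov-Sinai) entropy h(mu), computed with the generating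
  partition into 1-cylinders.\<close>
definition ks_entropy :: "(int \<Rightarrow> 'a) set \<Rightarrow> (int \<Rightarrow> 'a) measure \<Rightarrow> real" where
  "ks_entropy X \<mu> = lim (\<lambda>m. - (\<Sum>w\<in>lang X m. cp \<mu> X w * ln (cp \<mu> X w)) / real m)"

definition gamma0 :: "(int \<Rightarrow> 'a) set \<Rightarrow> (int \<Rightarrow> 'a) measure \<Rightarrow> real" where
  "gamma0 X \<mu> = Inf {g::real. g > 0 \<and> (\<exists>n0. \<forall>m\<ge>n0. \<forall>u\<in>lang X m. cp \<mu> X u \<le> g ^ m)}"

definition subwords :: "nat \<Rightarrow> 'a list \<Rightarrow> 'a list set" where
  "subwords n u = {take n (drop i u) | i. i + n \<le> length u}"

definition E_set :: "(int \<Rightarrow> 'a) set \<Rightarrow> (int \<Rightarrow> 'a) measure \<Rightarrow> real \<Rightarrow> nat \<Rightarrow> 'a list set" where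
  "E_set X \<mu> \<delta> n = {u \<in> lang X n. \<bar>- (1 / real n) * ln (cp \<mu> X u) - ks_entropy X \<mu>\<bar> < \<delta>}"

text \<open>G_{n,k}: u_1^n = u_l^k (l = k-n+1), i.e. take n u = drop (k-n) u.\<close>
definition G_set :: "(int \<Rightarrow> 'a) set \<Rightarrow> (int \<Rightarrow> 'a) measure \<Rightarrow> real \<Rightarrow> nat \<Rightarrow> nat \<Rightarrow> 'a list set" where
  "G_set X \<mu> \<delta> n k = {u \<in> lang X k. take n u = drop (k - n) u \<and> take n u \<in> E_set X \<mu> \<delta> n}"

definition Q_set :: "(int \<Rightarrow> 'a) set \<Rightarrow> (int \<Rightarrow> 'a) measure \<Rightarrow> real \<Rightarrow> nat \<Rightarrow> nat \<Rightarrow> ('a list \<times> 'a list) set" where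
  "Q_set X \<mu> \<delta> n k = {(u, v) \<in> G_set X \<mu> \<delta> n k \<times> G_set X \<mu> \<delta> n k.
      subwords n u \<inter> subwords n v \<noteq> {}}"

definition Qj_set :: "(int \<Rightarrow> 'a) set \<Rightarrow> (int \<Rightarrow> 'a) measure \<Rightarrow> real \<Rightarrow> nat \<Rightarrow> nat \<Rightarrow> nat \<Rightarrow> ('a list \<times> 'a list) set" where
  "Qj_set X \<mu> \<delta> n k j = {(u, v) \<in> Q_set X \<mu> \<delta> n k. card (subwords n u \<union> subwords n v) = j}"

definition prodmeas :: "(int \<Rightarrow> 'a) measure \<Rightarrow> (int \<Rightarrow> 'a) set \<Rightarrow> ('a list \<times> 'a list) set \<Rightarrow> real" where
  "prodmeas \<mu> X S = (\<Sum>(u, v)\<in>S. cp \<mu> X u * cp \<mu> X v)"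

end

theory Submission
  imports Defs
begin

(*
  A pair (u, v) in Q^j_{n,k} is determined by two cyclic words of length L = k - n (each word
  repeats its first n letters at the end), whose 2L cyclic windows of length n take only j
  distinct values. Rotate each cyclic word at a cut point and cut it into blocks of lengths
  between n/4 and n/2. A block lying inside a window that already occurred earlier is a copy of
  an earlier segment, so the pair is encoded by the two cut points and, for every block, either
  "fresh" or the position it copies. By quasi-multiplicativity, mu(u) mu(v) is at most
  K^O(k/n) mu(u_1^n) mu(v_1^n) times the product of the block measures; summing over all pairs
  with a given encoding, fresh blocks contribute at most 1 and copied blocks, being determined,
  at most g^length for a rate g < gamma. Choosing the cut points by averaging makes the copied
  length at least (2L - j)(1 - O(n/k)), and there are only n^O(k/n) encodings; for large n this
  gives the bound p(n)^(k/n) exp(-2n(h - delta)) gamma^(2L + 2 - j) with p a monomial.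
*)

section \<open>Copy schemes\<close>

fun split_blocks :: "nat list \<Rightarrow> 'a list \<Rightarrow> 'a list list" where
  "split_blocks [] xs = []"
| "split_blocks (l # ls) xs = take l xs # split_blocks ls (drop l xs)"

lemma split_blocks_append:
  "length xs = sum_list ls \<Longrightarrow> split_blocks (ls @ ls') (xs @ ys) = split_blocks ls xs @ split_blocks ls' ys"
  by (induction ls arbitrary: xs) auto

lemma concat_split_blocks: "length xs = sum_list ls \<Longrightarrow> concat (split_blocks ls xs) = xs"
  by (induction ls arbitrary: xs) auto

lemma length_split_blocks [simp]: "length (split_blocks ls xs) = length ls"
  by (induction ls arbitrary: xs) auto

definition block_start :: "nat list \<Rightarrow> nat \<Rightarrow> nat" where
  "block_start ls k = sum_list (take k ls)"

lemma block_start_Suc: "k < length ls \<Longrightarrow> block_start ls (Suc k) = block_start ls k + ls ! k"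
  by (simp add: block_start_def take_Suc_conv_app_nth)

lemma block_start_mono: "k \<le> k' \<Longrightarrow> block_start ls k \<le> block_start ls k'"
  unfolding block_start_def by (metis le_add1 le_add_diff_inverse sum_list_append take_add)

lemma block_start_append: "k \<le> length ls \<Longrightarrow> block_start (ls @ ls') k = block_start ls k"
  by (simp add: block_start_def)

lemma block_start_length [simp]: "block_start ls (length ls) = sum_list ls"
  by (simp add: block_start_def)

lemma blocks_disjoint: "k < k' \<Longrightarrow> k' \<le> length ls \<Longrightarrow> block_start ls k + ls ! k \<le> block_start ls k'"
  using block_start_Suc[of k ls] block_start_mono[of "Suc k" k' ls] by simp

lemma block_end_le_sum_list: "k < length ls \<Longrightarrow> block_start ls k + ls ! k \<le> sum_list ls"
  using blocks_disjoint[of k "length ls" ls] by simp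

lemma block_containing:
  "p < sum_list ls \<Longrightarrow> \<exists>k<length ls. block_start ls k \<le> p \<and> p < block_start ls k + ls ! k"
proof (induction ls arbitrary: p)
  case (Cons l ls)
  show ?case
  proof (cases "p < l")
    case True
    then show ?thesis by (intro exI[of _ 0]) (auto simp: block_start_def)
  next
    case False
    then have "p - l < sum_list ls" using Cons.prems by simp
    then obtain k where "k < length ls" "block_start ls k \<le> p - l" "p - l < block_start ls k + ls ! k"
      using Cons.IH by blast
    moreover have "block_start (l # ls) (Suc k) = l + block_start ls k"
      by (simp add: block_start_def)
    ultimately show ?thesis using False by (intro exI[of _ "Suc k"]) auto
  qed
qed simp

definition extends_by_copy :: "'a list \<Rightarrow> nat \<Rightarrow> 'a list \<Rightarrow> bool" where
  "extends_by_copy T q T' \<longleftrightarrow>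
     q < length T \<and> (\<forall>t<length T'. (T @ T') ! (length T + t) = (T @ T') ! (q + t))"

lemma extends_by_copy_unique:
  assumes "extends_by_copy T q T1" "extends_by_copy T q T2" "length T1 = length T2"
  shows "T1 = T2"
proof -
  have "T1 ! t = T2 ! t" if "t < length T1" for t
    using that
  proof (induction t rule: less_induct)
    case (less t)
    have "T1 ! t = (T @ T1) ! (q + t)" "T2 ! t = (T @ T2) ! (q + t)"
      using assms less.prems by (auto simp: extends_by_copy_def nth_append)
    moreover have "q + t - length T < t" if "\<not> q + t < length T"
      using assms(1) that unfolding extends_by_copy_def by linarith
    ultimately show ?case
      using less by (cases "q + t < length T") (auto simp: nth_append)
  qed
  then show ?thesis using assms(3) by (intro nth_equalityI) auto
qed

text \<open>A copy scheme lists blocks (length, source): a block with source None is fresh, a block with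
  source Some q repeats the segment starting at the earlier position q (which may overlap the block).\<close>

definition copy_scheme_valid :: "(nat \<times> nat option) list \<Rightarrow> 'a list \<Rightarrow> bool" where
  "copy_scheme_valid bl T \<longleftrightarrow> (\<forall>k < length bl. \<forall>q. snd (bl ! k) = Some q \<longrightarrow>
      q < block_start (map fst bl) k \<and>
      (\<forall>t < fst (bl ! k). T ! (block_start (map fst bl) k + t) = T ! (q + t)))"

definition copied_length :: "(nat \<times> nat option) list \<Rightarrow> nat" where
  "copied_length bl = sum_list (map (\<lambda>(l, src). if src = None then 0 else l) bl)"

lemma copy_scheme_valid_snoc:
  assumes T: "length T = sum_list (map fst bl)" and T': "length T' = l"
  shows "copy_scheme_valid (bl @ [(l, src)]) (T @ T') \<longleftrightarrow>
    copy_scheme_valid bl T \<and> (\<forall>q. src = Some q \<longrightarrow> extends_by_copy T q T')"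
proof -
  have old_blocks: "(q < block_start (map fst bl) k \<and>
        (\<forall>t < fst (bl ! k). (T @ T') ! (block_start (map fst bl) k + t) = (T @ T') ! (q + t)))
      \<longleftrightarrow> (q < block_start (map fst bl) k \<and>
        (\<forall>t < fst (bl ! k). T ! (block_start (map fst bl) k + t) = T ! (q + t)))"
    if "k < length bl" for k q
  proof -
    have "block_start (map fst bl) k + fst (bl ! k) \<le> length T"
      using block_end_le_sum_list[of k "map fst bl"] that T by simp
    then show ?thesis by (auto simp: nth_append)
  qed
  have "copy_scheme_valid (bl @ [(l, src)]) (T @ T') \<longleftrightarrow>
     (\<forall>k < length bl. \<forall>q. snd (bl ! k) = Some q \<longrightarrow> q < block_start (map fst bl) k \<and>
        (\<forall>t < fst (bl ! k). (T @ T') ! (block_start (map fst bl) k + t) = (T @ T') ! (q + t))) \<and>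
     (\<forall>q. src = Some q \<longrightarrow> extends_by_copy T q T')"
    using T T' block_start_length[of "map fst bl"] unfolding copy_scheme_valid_def extends_by_copy_def
    by (auto simp: nth_append block_start_append less_Suc_eq)
  then show ?thesis
    unfolding copy_scheme_valid_def by (simp add: old_blocks)
qed

lemma sum_lists_length_add:
  fixes F :: "'a list \<Rightarrow> 'b::comm_monoid_add"
  shows "(\<Sum>T\<in>{T. length T = m + l}. F T) = (\<Sum>T\<in>{T. length T = m}. \<Sum>T'\<in>{T'. length T' = l}. F (T @ T'))"
proof -
  have image: "{T. length T = m + l} = (\<lambda>(T, T'). T @ T') ` ({T. length T = m} \<times> {T'. length T' = l})"
    by (auto intro!: image_eqI[where x = "(take m T, drop m T)" for T])
  have "inj_on (\<lambda>(T, T'). T @ T') ({T::'a list. length T = m} \<times> {T'. length T' = l})"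
    by (auto simp: inj_on_def)
  then show ?thesis
    by (subst image, subst sum.reindex) (simp_all add: sum.cartesian_product split_def)
qed

function block_lengths :: "nat \<Rightarrow> nat \<Rightarrow> nat list" where
  "block_lengths b x =
    (if x = 0 then [] else if x < 2 * b \<or> b = 0 then [x] else b # block_lengths b (x - b))"
  by auto
termination by (relation "Wellfounded.measure snd") auto

declare block_lengths.simps [simp del]

lemma sum_list_block_lengths [simp]: "sum_list (block_lengths b x) = x"
  by (induction b x rule: block_lengths.induct) (subst block_lengths.simps, auto)

lemma block_lengths_bounds:
  "0 < b \<Longrightarrow> x = 0 \<or> b \<le> x \<Longrightarrow> l \<in> set (block_lengths b x) \<Longrightarrow> b \<le> l \<and> l < 2 * b"
proof (induction b x rule: block_lengths.induct)
  case (1 b x)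
  show ?case
  proof (cases "x = 0 \<or> x < 2 * b")
    case True
    then show ?thesis using 1 by (subst (asm) block_lengths.simps) auto
  next
    case False
    then have "l \<in> set (b # block_lengths b (x - b))" using 1 by (subst (asm) block_lengths.simps) auto
    then show ?thesis using 1 False by auto
  qed
qed

lemma length_block_lengths: "0 < b \<Longrightarrow> length (block_lengths b x) \<le> x div b + 1"
proof (induction b x rule: block_lengths.induct)
  case (1 b x)
  show ?case
  proof (cases "x = 0 \<or> x < 2 * b")
    case False
    then have "x div b = (x - b) div b + 1"
      using "1.prems" by (metis div_add_self2 le_add_diff_inverse2 less_imp_le_nat mult_2 not_less
          not_less_iff_gr_or_eq trans_less_add2 neq0_conv)
    then show ?thesis using 1 False by (subst block_lengths.simps) auto
  qed (use 1 in \<open>subst block_lengths.simps, auto\<close>)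
qed

lemma repeated_window_copies_block:
  assumes "i' < i" "i + n \<le> length T" "take n (drop i' T) = take n (drop i T)"
    and "i \<le> s" "s + l \<le> i + n"
  shows "i' + (s - i) < s \<and> (\<forall>t<l. T ! (s + t) = T ! (i' + (s - i) + t))"
proof -
  have "T ! (s + t) = T ! (i' + (s - i) + t)" if "t < l" for t
  proof -
    have j: "s - i + t < n" using assms that by linarith
    have "take n (drop i T) ! (s - i + t) = T ! (i + (s - i + t))"
      using assms(2) j by simp
    moreover have "take n (drop i' T) ! (s - i + t) = T ! (i' + (s - i + t))"
      using assms(1,2) j by simp
    moreover have "i + (s - i + t) = s + t" "i' + (s - i + t) = i' + (s - i) + t"
      using assms(4) by simp_all
    ultimately show ?thesis using assms(3) by metis
  qed
  then show ?thesis using assms by simp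
qed

lemma copied_length_zip:
  assumes "length srcs = length ls"
  shows "copied_length (zip ls srcs) =
    card (\<Union>k\<in>{k. k < length ls \<and> srcs ! k \<noteq> None}. {block_start ls k..<block_start ls k + ls ! k})"
proof -
  let ?C = "{k. k < length ls \<and> srcs ! k \<noteq> None}"
  have "copied_length (zip ls srcs) = (\<Sum>k<length ls. if srcs ! k = None then 0 else ls ! k)"
    unfolding copied_length_def using assms
    by (simp add: sum_list_sum_nth atLeast0LessThan)
  also have "\<dots> = (\<Sum>k\<in>?C. ls ! k)"
    by (rule sum.mono_neutral_cong_right) auto
  also have "\<dots> = card (\<Union>k\<in>?C. {block_start ls k..<block_start ls k + ls ! k})"
  proof (subst card_UN_disjoint)
    show "\<forall>i\<in>?C. \<forall>j\<in>?C. i \<noteq> j \<longrightarrow>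
        {block_start ls i..<block_start ls i + ls ! i} \<inter> {block_start ls j..<block_start ls j + ls ! j} = {}"
    proof (intro ballI impI)
      fix i j assume "i \<in> ?C" "j \<in> ?C" "i \<noteq> j"
      then show "{block_start ls i..<block_start ls i + ls ! i} \<inter> {block_start ls j..<block_start ls j + ls ! j} = {}"
        using blocks_disjoint[of i j ls] blocks_disjoint[of j i ls] by (cases "i < j") auto
    qed
  qed auto
  finally show ?thesis .
qed

lemma exists_copy_scheme:
  fixes T :: "'a list"
  assumes ls: "sum_list ls = length T" "\<forall>l\<in>set ls. b \<le> l \<and> l < 2 * b"
    and b: "1 \<le> b" "4 * b \<le> n"
    and P: "\<forall>i\<in>P. i + n \<le> length T \<and> (\<exists>i'<i. take n (drop i' T) = take n (drop i T))"
  shows "\<exists>srcs. length srcs = length ls \<and> set srcs \<subseteq> insert None (Some ` {..<length T}) \<and>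
           copy_scheme_valid (zip ls srcs) T \<and> card P \<le> copied_length (zip ls srcs)"
proof -
  \<comment> \<open>a block of length below 2b containing position i + a lies inside the window [i, i + n)\<close>
  define a where "a = 2 * b - 2"
  define s where "s = block_start ls"
  define hits where "hits k i \<longleftrightarrow> i \<in> P \<and> s k \<le> i + a \<and> i + a < s k + ls ! k" for k i
  define origin where "origin i = (SOME i'. i' < i \<and> take n (drop i' T) = take n (drop i T))" for i
  define source where "source k = (let i = SOME i. hits k i in origin i + (s k - i))" for k
  define srcs where "srcs = map (\<lambda>k. if \<exists>i. hits k i then Some (source k) else None) [0..<length ls]"
  have length_srcs: "length srcs = length ls" by (simp add: srcs_def)
  have copy: "source k < s k \<and> source k < length T \<and> (\<forall>t < ls ! k. T ! (s k + t) = T ! (source k + t))"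
    if k: "k < length ls" and "\<exists>i. hits k i" for k
  proof -
    define i where "i = (SOME i. hits k i)"
    have "hits k i" using \<open>\<exists>i. hits k i\<close> unfolding i_def by (rule someI_ex)
    then have "i \<in> P" and i: "s k \<le> i + a" "i + a < s k + ls ! k" by (auto simp: hits_def)
    then have "\<exists>i'<i. take n (drop i' T) = take n (drop i T)" using P by blast
    then have origin: "origin i < i" "take n (drop (origin i) T) = take n (drop i T)"
      unfolding origin_def by (metis (mono_tags, lifting) someI_ex)+
    have "b \<le> ls ! k" "ls ! k < 2 * b" using ls(2) k by auto
    then have "i \<le> s k" "s k + ls ! k \<le> i + n" using i b by (auto simp: a_def)
    moreover have "s k + ls ! k \<le> length T"
      using block_end_le_sum_list[OF k] ls(1) by (simp add: s_def)
    moreover have "i + n \<le> length T" using P \<open>i \<in> P\<close> by blast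
    ultimately have "origin i + (s k - i) < s k \<and>
        (\<forall>t<ls ! k. T ! (s k + t) = T ! (origin i + (s k - i) + t))"
      using repeated_window_copies_block[OF origin(1) _ origin(2)] by blast
    moreover have "source k = origin i + (s k - i)" by (simp add: source_def i_def Let_def)
    ultimately show ?thesis using \<open>s k + ls ! k \<le> length T\<close> \<open>b \<le> ls ! k\<close> b by auto
  qed
  have srcs_nth: "srcs ! k = (if \<exists>i. hits k i then Some (source k) else None)" if "k < length ls" for k
    using that by (simp add: srcs_def)
  have valid: "copy_scheme_valid (zip ls srcs) T"
    using copy length_srcs by (auto simp: copy_scheme_valid_def srcs_nth s_def split: if_splits)
  have range: "set srcs \<subseteq> insert None (Some ` {..<length T})"
  proof
    fix x assume "x \<in> set srcs"
    then obtain k where "k < length ls" "x = srcs ! k" using length_srcs by (metis in_set_conv_nth)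
    then show "x \<in> insert None (Some ` {..<length T})" using copy[of k] by (auto simp: srcs_nth)
  qed
  let ?C = "{k. k < length ls \<and> srcs ! k \<noteq> None}"
  have "(\<lambda>i. i + a) ` P \<subseteq> (\<Union>k\<in>?C. {s k..<s k + ls ! k})"
  proof
    fix x assume "x \<in> (\<lambda>i. i + a) ` P"
    then obtain i where i: "i \<in> P" "x = i + a" by blast
    then have "i + a < sum_list ls" using P b ls(1) by (auto simp: a_def)
    then obtain k where k: "k < length ls" "s k \<le> i + a" "i + a < s k + ls ! k"
      using block_containing unfolding s_def by blast
    then have "hits k i" using i by (simp add: hits_def)
    then have "k \<in> ?C" using k by (auto simp: srcs_nth)
    then show "x \<in> (\<Union>k\<in>?C. {s k..<s k + ls ! k})" using i k by auto
  qed
  then have "card ((\<lambda>i. i + a) ` P) \<le> card (\<Union>k\<in>?C. {s k..<s k + ls ! k})"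
    by (intro card_mono) auto
  then have "card P \<le> card (\<Union>k\<in>?C. {s k..<s k + ls ! k})"
    by (simp add: card_image)
  then show ?thesis
    using length_srcs range valid copied_length_zip[OF length_srcs] by (auto simp: s_def)
qed

section \<open>Counting repeated windows\<close>

definition repeated_positions :: "'b set \<Rightarrow> ('b \<Rightarrow> 'c) \<Rightarrow> 'b set" where
  "repeated_positions A w = {i\<in>A. \<exists>i'\<in>A. i' \<noteq> i \<and> w i' = w i}"

definition later_repeats :: "nat set \<Rightarrow> (nat \<Rightarrow> 'c) \<Rightarrow> nat set" where
  "later_repeats A w = {i\<in>A. \<exists>i'\<in>A. i' < i \<and> w i' = w i}"

lemma card_repeated_positions_le:
  assumes fin: "finite A"
  shows "card (repeated_positions A w) \<le> 2 * (card A - card (w ` A))"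
proof -
  define M where "M = repeated_positions A w"
  define fibre where "fibre y = {i\<in>A. w i = y}" for y
  have card_union_fibres: "card (\<Union>y\<in>B. fibre y) = (\<Sum>y\<in>B. card (fibre y))" if "finite B" for B
    using that fin by (intro card_UN_disjoint) (auto simp: fibre_def)
  have A: "A = (\<Union>y\<in>w ` A. fibre y)" and M: "M = (\<Union>y\<in>w ` M. fibre y)"
    by (auto simp: fibre_def M_def repeated_positions_def) (metis)+
  have fibre_ge_1: "1 \<le> card (fibre y)" if "y \<in> w ` A" for y
    using that fin by (auto simp: fibre_def Suc_le_eq card_gt_0_iff)
  have fibre_ge_2: "2 \<le> card (fibre y)" if "y \<in> w ` M" for y
  proof -
    from that obtain i i' where "i \<in> A" "i' \<in> A" "i' \<noteq> i" "w i' = w i" "y = w i"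
      by (auto simp: M_def repeated_positions_def)
    then have "{i, i'} \<subseteq> fibre y" by (auto simp: fibre_def)
    then have "card {i, i'} \<le> card (fibre y)" using fin by (intro card_mono) (auto simp: fibre_def)
    then show ?thesis using \<open>i' \<noteq> i\<close> by simp
  qed
  have "card M = (\<Sum>y\<in>w ` M. card (fibre y))"
    using fin by (subst M, subst card_union_fibres) (auto simp: M_def repeated_positions_def)
  also have "\<dots> \<le> (\<Sum>y\<in>w ` M. 2 * (card (fibre y) - 1))"
  proof (rule sum_mono)
    fix y assume "y \<in> w ` M"
    then show "card (fibre y) \<le> 2 * (card (fibre y) - 1)" using fibre_ge_2 by fastforce
  qed
  also have "\<dots> \<le> (\<Sum>y\<in>w ` A. 2 * (card (fibre y) - 1))"
    using fin by (intro sum_mono2) (auto simp: M_def repeated_positions_def)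
  also have "\<dots> = 2 * ((\<Sum>y\<in>w ` A. card (fibre y)) - card (w ` A))"
    using fibre_ge_1 by (simp add: sum_distrib_left sum_subtractf_nat diff_mult_distrib2)
  also have "(\<Sum>y\<in>w ` A. card (fibre y)) = card A"
    using fin by (subst (2) A, subst card_union_fibres) auto
  finally show ?thesis by (simp add: M_def)
qed

text \<open>The first occurrences within Lin, together with the positions outside Lin whose value is unique
  in A, carry pairwise distinct values.\<close>

lemma card_le_later_repeats:
  assumes fin: "finite A" and Lin: "Lin \<subseteq> A"
  shows "card A \<le> card (later_repeats Lin w) + card (w ` A) + card ((A - Lin) \<inter> repeated_positions A w)"
proof -
  define P where "P = later_repeats Lin w"
  define M where "M = repeated_positions A w"
  define F where "F = Lin - P"
  define S where "S = (A - Lin) - M"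
  have "inj_on w (F \<union> S)"
  proof (rule inj_onI, rule ccontr)
    fix x y assume "x \<in> F \<union> S" "y \<in> F \<union> S" "w x = w y" "x \<noteq> y"
    then show False
      using Lin by (cases x y rule: linorder_cases)
        (auto simp: F_def S_def P_def M_def later_repeats_def repeated_positions_def)
  qed
  then have "card (F \<union> S) \<le> card (w ` A)"
    using Lin fin by (subst card_image[symmetric]) (auto intro!: card_mono simp: F_def S_def)
  moreover have "card (F \<union> S) = card F + card S"
    using fin Lin by (intro card_Un_disjoint) (auto simp: F_def S_def intro: finite_subset)
  moreover have "card Lin = card P + card F"
  proof -
    have "finite Lin" "P \<subseteq> Lin" using fin Lin finite_subset by (auto simp: P_def later_repeats_def)
    then have "finite P" using finite_subset by blast
    then show ?thesis using \<open>finite Lin\<close> \<open>P \<subseteq> Lin\<close> card_Diff_subset[of P Lin] card_mono[of Lin P]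
      by (simp add: F_def)
  qed
  moreover have "card A = card Lin + card (A - Lin)"
    using fin Lin by (metis card_Diff_subset card_mono finite_subset le_add_diff_inverse)
  moreover have "card (A - Lin) = card ((A - Lin) \<inter> M) + card S"
  proof -
    have "A - Lin = ((A - Lin) \<inter> M) \<union> S" "((A - Lin) \<inter> M) \<inter> S = {}" by (auto simp: S_def)
    then show ?thesis using fin card_Un_disjoint[of "(A - Lin) \<inter> M" S] by (simp add: S_def)
  qed
  ultimately show ?thesis by (simp add: P_def M_def)
qed

lemma exists_le_average:
  fixes f :: "'b \<Rightarrow> nat"
  assumes "finite S" "S \<noteq> {}"
  shows "\<exists>x\<in>S. card S * f x \<le> sum f S"
proof -
  have "Min (f ` S) \<in> f ` S" using assms by (intro Min_in) auto
  then obtain x where "x \<in> S" "f x = Min (f ` S)" by auto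
  moreover have "card S * Min (f ` S) \<le> sum f S"
    using sum_bounded_below[of S "Min (f ` S)" f] assms by simp
  ultimately show ?thesis by metis
qed

text \<open>The positions among the last n - 1 of a cyclic word of length L, whose windows wrap around,
  that a rotation by m sends into M.\<close>

definition wrap_hits :: "nat \<Rightarrow> nat \<Rightarrow> nat \<Rightarrow> nat set \<Rightarrow> nat set" where
  "wrap_hits L n m M = {i. i < L \<and> L < i + n \<and> (i + m) mod L \<in> M}"

lemma sum_card_wrap_hits_le:
  assumes M: "M \<subseteq> {..<L}"
  shows "(\<Sum>m<L. card (wrap_hits L n m M)) \<le> (n - 1) * card M"
proof -
  define S where "S = {i. i < L \<and> L < i + n}"
  have "S \<subseteq> {L + 1 - n..<L}" by (auto simp: S_def)
  then have card_S: "card S \<le> n - 1" using card_mono[of "{L + 1 - n..<L}" S] by simp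
  have per_position: "card {m\<in>{..<L}. (i + m) mod L \<in> M} \<le> card M" for i
  proof (rule card_inj_on_le[where f = "\<lambda>m. (i + m) mod L"])
    show "inj_on (\<lambda>m. (i + m) mod L) {m \<in> {..<L}. (i + m) mod L \<in> M}"
    proof (rule inj_onI)
      fix x y assume "x \<in> {m \<in> {..<L}. (i + m) mod L \<in> M}" "y \<in> {m \<in> {..<L}. (i + m) mod L \<in> M}"
        and "(i + x) mod L = (i + y) mod L"
      then have "x mod L = y mod L" "x < L" "y < L" by (auto simp only: nat_mod_eq_iff) auto
      then show "x = y" by simp
    qed
  qed (use M finite_subset in auto)
  have "(\<Sum>m<L. card (wrap_hits L n m M)) = (\<Sum>m<L. \<Sum>i\<in>S. if (i + m) mod L \<in> M then 1 else 0)"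
    by (intro sum.cong refl) (simp add: wrap_hits_def S_def sum.If_cases Int_def conj_assoc)
  also have "\<dots> = (\<Sum>i\<in>S. card {m\<in>{..<L}. (i + m) mod L \<in> M})"
    by (subst sum.swap) (simp add: sum.If_cases Int_def)
  also have "\<dots> \<le> card S * card M"
    using sum_bounded_above[of S "\<lambda>i. card {m\<in>{..<L}. (i + m) mod L \<in> M}" "card M"] per_position by simp
  also have "\<dots> \<le> (n - 1) * card M" using card_S by simp
  finally show ?thesis .
qed

section \<open>Windows of a pair of cyclic words\<close>

definition cyclic_window :: "nat \<Rightarrow> 'a list \<Rightarrow> nat \<Rightarrow> 'a list" where
  "cyclic_window n c i = map (\<lambda>s. c ! ((i + s) mod length c)) [0..<n]"

lemma cyclic_window_mod: "cyclic_window n c (i mod length c) = cyclic_window n c i"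
  unfolding cyclic_window_def by (intro map_cong refl) (simp add: mod_add_left_eq)

lemma cyclic_window_rotate: "0 < length c \<Longrightarrow> cyclic_window n (rotate m c) i = cyclic_window n c (i + m)"
  unfolding cyclic_window_def
  by (intro map_cong refl) (simp add: nth_rotate mod_add_right_eq add.commute add.left_commute)

lemma cyclic_window_eq_take_drop: "i + n \<le> length c \<Longrightarrow> cyclic_window n c i = take n (drop i c)"
  unfolding cyclic_window_def by (intro nth_equalityI) auto

lemma subwords_append_take:
  assumes c: "length c = L" and "n \<le> L" "0 < L"
  shows "subwords n (c @ take n c) = cyclic_window n c ` {..<L}"
proof -
  have window: "take n (drop i (c @ take n c)) = cyclic_window n c i" if "i \<le> L" for i
  proof (rule nth_equalityI)
    fix s assume "s < length (take n (drop i (c @ take n c)))"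
    then have s: "s < n" using assms that by simp
    have "(i + s) mod L = i + s - L" if "\<not> i + s < L"
      using that s \<open>i \<le> L\<close> \<open>n \<le> L\<close> le_mod_geq[of L "i + s"] by simp
    then show "take n (drop i (c @ take n c)) ! s = cyclic_window n c i ! s"
      using s \<open>i \<le> L\<close> assms by (cases "i + s < L") (auto simp: cyclic_window_def nth_append add.commute)
  qed (use assms that in \<open>simp add: cyclic_window_def\<close>)
  have dom: "{i. i + n \<le> length (c @ take n c)} = {..L}" using assms by auto
  have "subwords n (c @ take n c) = (\<lambda>i. take n (drop i (c @ take n c))) ` {..L}"
    unfolding subwords_def using dom by blast
  also have "\<dots> = cyclic_window n c ` {..L}"
    using window by (intro image_cong) auto
  also have "\<dots> = cyclic_window n c ` {..<L}"
  proof -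
    have "{..L} = insert L {..<L}" by auto
    moreover have "cyclic_window n c L = cyclic_window n c 0"
      using cyclic_window_mod[of n c L] c by simp
    ultimately show ?thesis using \<open>0 < L\<close> by (simp add: insert_absorb)
  qed
  finally show ?thesis .
qed

definition pair_window :: "nat \<Rightarrow> 'a list \<Rightarrow> 'a list \<Rightarrow> nat \<Rightarrow> 'a list" where
  "pair_window n c d p = (if p < length c then cyclic_window n c p else cyclic_window n d (p - length c))"

definition rotate_index :: "nat \<Rightarrow> nat \<Rightarrow> nat \<Rightarrow> nat \<Rightarrow> nat" where
  "rotate_index L mu mv p = (if p < L then (p + mu) mod L else L + (p - L + mv) mod L)"

definition linear_positions :: "nat \<Rightarrow> nat \<Rightarrow> nat set" where
  "linear_positions L n = {i. i + n \<le> L} \<union> {i. L \<le> i \<and> i + n \<le> 2 * L}"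

lemma mod_add_left_cancel_nat: "((i::nat) + x) mod L = (i + y) mod L \<Longrightarrow> x mod L = y mod L"
  by (simp add: nat_mod_eq_iff)

lemma rotate_index_less:
  assumes "0 < L" "p < 2 * L"
  shows "rotate_index L mu mv p < 2 * L"
proof -
  have lt: "(p + mu) mod L < L" "(p - L + mv) mod L < L" using assms by simp_all
  show ?thesis
  proof (cases "p < L")
    case True
    show ?thesis unfolding rotate_index_def if_P[OF True] using lt(1) by linarith
  next
    case False
    show ?thesis unfolding rotate_index_def if_not_P[OF False] using lt(2) by linarith
  qed
qed

lemma inj_on_rotate_index: "inj_on (rotate_index L mu mv) {..<2 * L}"
proof (rule inj_onI)
  fix x y assume x: "x \<in> {..<2 * L}" and y: "y \<in> {..<2 * L}"
    and eq: "rotate_index L mu mv x = rotate_index L mu mv y"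
  then have "0 < L" by auto
  then have lt: "(x + mu) mod L < L" "(y + mu) mod L < L" by simp_all
  show "x = y"
  proof (cases "x < L"; cases "y < L")
    assume "x < L" "y < L"
    then show "x = y"
      using eq mod_add_left_cancel_nat[of mu x L y] by (simp add: rotate_index_def add.commute)
  next
    assume "x < L" "\<not> y < L"
    then show "x = y" using eq lt by (simp add: rotate_index_def)
  next
    assume "\<not> x < L" "y < L"
    then show "x = y" using eq lt by (simp add: rotate_index_def)
  next
    assume "\<not> x < L" "\<not> y < L"
    then have "x - L < L" "y - L < L" using x y by auto
    then show "x = y"
      using eq \<open>\<not> x < L\<close> \<open>\<not> y < L\<close> mod_add_left_cancel_nat[of mv "x - L" L "y - L"]
      by (simp add: rotate_index_def add.commute)
  qed
qed

lemma pair_window_rotate: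
  assumes c: "length c = L" and d: "length d = L" and L: "0 < L"
  shows "pair_window n (rotate mu c) (rotate mv d) p = pair_window n c d (rotate_index L mu mv p)"
proof (cases "p < L")
  case True
  then show ?thesis
    using assms cyclic_window_mod[of n c "p + mu"]
    by (simp add: pair_window_def rotate_index_def cyclic_window_rotate)
next
  case False
  then show ?thesis
    using assms cyclic_window_mod[of n d "p - L + mv"]
    by (simp add: pair_window_def rotate_index_def cyclic_window_rotate)
qed

lemma pair_window_image:
  assumes c: "length c = L" and d: "length d = L"
  shows "pair_window n c d ` {..<2 * L} = cyclic_window n c ` {..<L} \<union> cyclic_window n d ` {..<L}"
proof (intro equalityI subsetI)
  fix x assume "x \<in> cyclic_window n c ` {..<L} \<union> cyclic_window n d ` {..<L}"
  then consider i where "i < L" "x = cyclic_window n c i" | i where "i < L" "x = cyclic_window n d i"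
    by blast
  then show "x \<in> pair_window n c d ` {..<2 * L}"
  proof cases
    case 1
    then show ?thesis using c by (intro image_eqI[of _ _ i]) (auto simp: pair_window_def)
  next
    case 2
    then show ?thesis using c by (intro image_eqI[of _ _ "L + i"]) (auto simp: pair_window_def)
  qed
qed (use c d in \<open>auto simp: pair_window_def\<close>)

lemma take_drop_eq_pair_window:
  assumes "length c = L" "length d = L" "i \<in> linear_positions L n"
  shows "take n (drop i (c @ d)) = pair_window n c d i"
  using assms by (auto simp: linear_positions_def pair_window_def cyclic_window_eq_take_drop)

lemma repeated_wrapping_positions_subset:
  fixes c d :: "'a list" and n :: nat
  assumes c: "length c = L" and d: "length d = L" and "0 < L"
  defines "M \<equiv> repeated_positions {..<2 * L} (pair_window n c d)"
  shows "({..<2 * L} - linear_positions L n) \<inter> repeated_positions {..<2 * L} (pair_window n (rotate mu c) (rotate mv d))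
    \<subseteq> wrap_hits L n mu {p. p < L \<and> p \<in> M} \<union> (\<lambda>i. L + i) ` wrap_hits L n mv {p. p < L \<and> L + p \<in> M}"
proof
  define \<rho> where "\<rho> = rotate_index L mu mv"
  fix x assume "x \<in> ({..<2 * L} - linear_positions L n) \<inter>
      repeated_positions {..<2 * L} (pair_window n (rotate mu c) (rotate mv d))"
  then obtain x' where x': "x' < 2 * L" "x' \<noteq> x"
      "pair_window n c d (\<rho> x') = pair_window n c d (\<rho> x)"
    and x: "x < 2 * L" "x \<notin> linear_positions L n"
    using pair_window_rotate[OF c d \<open>0 < L\<close>] by (auto simp: repeated_positions_def \<rho>_def)
  have "\<rho> x' \<noteq> \<rho> x" using inj_on_rotate_index x' x by (auto simp: \<rho>_def dest: inj_onD)
  then have M: "\<rho> x \<in> M"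
    using rotate_index_less[OF \<open>0 < L\<close>] x' x by (auto simp: M_def repeated_positions_def \<rho>_def)
  show "x \<in> wrap_hits L n mu {p. p < L \<and> p \<in> M} \<union> (\<lambda>i. L + i) ` wrap_hits L n mv {p. p < L \<and> L + p \<in> M}"
  proof (cases "x < L")
    case True
    then have "L < x + n" using x by (auto simp: linear_positions_def)
    moreover have "(x + mu) mod L \<in> M" "(x + mu) mod L < L"
      using M True \<open>0 < L\<close> by (simp_all add: \<rho>_def rotate_index_def)
    ultimately show ?thesis using True by (simp add: wrap_hits_def)
  next
    case False
    then have "x - L < L" "L < x - L + n" using x by (auto simp: linear_positions_def)
    moreover have "L + (x - L + mv) mod L \<in> M" "(x - L + mv) mod L < L"
      using M False \<open>0 < L\<close> by (simp_all add: \<rho>_def rotate_index_def)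
    ultimately have "x - L \<in> wrap_hits L n mv {p. p < L \<and> L + p \<in> M}" by (simp add: wrap_hits_def)
    then show ?thesis using False by (intro UnI2 image_eqI[of _ _ "x - L"]) auto
  qed
qed

lemma card_pair_window_deficit:
  fixes c d :: "'a list"
  assumes c: "length c = L" and d: "length d = L" and "0 < L" "0 < n"
  defines "M \<equiv> repeated_positions {..<2 * L} (pair_window n c d)"
  shows "2 * L - card (pair_window n c d ` {..<2 * L}) \<le>
      card (later_repeats (linear_positions L n) (\<lambda>i. take n (drop i (rotate mu c @ rotate mv d))))
      + card (wrap_hits L n mu {p. p < L \<and> p \<in> M}) + card (wrap_hits L n mv {p. p < L \<and> L + p \<in> M})"
proof -
  define A where "A = {..<2 * L}"
  define Lin where "Lin = linear_positions L n"
  define w' where "w' = pair_window n (rotate mu c) (rotate mv d)"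
  define Su where "Su = wrap_hits L n mu {p. p < L \<and> p \<in> M}"
  define Sv where "Sv = wrap_hits L n mv {p. p < L \<and> L + p \<in> M}"
  have Lin_A: "Lin \<subseteq> A" using \<open>0 < n\<close> by (auto simp: Lin_def A_def linear_positions_def)
  have "later_repeats Lin w' = later_repeats Lin (\<lambda>i. take n (drop i (rotate mu c @ rotate mv d)))"
    using take_drop_eq_pair_window[of "rotate mu c" L "rotate mv d" _ n] c d
    by (auto simp: later_repeats_def Lin_def w'_def)
  moreover have "card (w' ` A) \<le> card (pair_window n c d ` A)"
    using pair_window_rotate[OF c d \<open>0 < L\<close>] rotate_index_less[OF \<open>0 < L\<close>]
    by (intro card_mono) (auto simp: w'_def A_def)
  moreover have "card ((A - Lin) \<inter> repeated_positions A w') \<le> card (Su \<union> (\<lambda>i. L + i) ` Sv)"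
    using repeated_wrapping_positions_subset[OF c d \<open>0 < L\<close>, of n mu mv]
    by (intro card_mono) (auto simp: Su_def Sv_def wrap_hits_def A_def Lin_def w'_def M_def)
  moreover have "card (Su \<union> (\<lambda>i. L + i) ` Sv) \<le> card Su + card Sv"
    using card_Un_le[of Su "(\<lambda>i. L + i) ` Sv"] by (simp add: card_image)
  ultimately show ?thesis
    using card_le_later_repeats[of A Lin w'] Lin_A by (simp add: A_def Lin_def Su_def Sv_def)
qed

text \<open>Cutting a cyclic word of length L at m leaves segments of lengths L - m and m, which can be
  split into blocks of lengths in [b, 2b) only if each of them is 0 or at least b.\<close>

definition cut_points :: "nat \<Rightarrow> nat \<Rightarrow> nat set" where
  "cut_points L b = {m. m < L \<and> (m = 0 \<or> (b \<le> m \<and> m + b \<le> L))}"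

definition pair_block_lengths :: "nat \<Rightarrow> nat \<Rightarrow> nat \<Rightarrow> nat \<Rightarrow> nat list" where
  "pair_block_lengths b L mu mv =
    block_lengths b (L - mu) @ block_lengths b mu @ block_lengths b (L - mv) @ block_lengths b mv"

lemma cut_points_subset: "cut_points L b \<subseteq> {..<L}"
  by (auto simp: cut_points_def)

lemma zero_in_cut_points: "0 < L \<Longrightarrow> 0 \<in> cut_points L b"
  by (simp add: cut_points_def)

lemma pair_block_lengths_bounds:
  assumes "0 < b" "b \<le> L" "mu \<in> cut_points L b" "mv \<in> cut_points L b"
  shows "\<forall>l\<in>set (pair_block_lengths b L mu mv). b \<le> l \<and> l < 2 * b"
proof
  fix l assume "l \<in> set (pair_block_lengths b L mu mv)"
  then obtain x where x: "x \<in> {L - mu, mu, L - mv, mv}" "l \<in> set (block_lengths b x)"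
    by (auto simp: pair_block_lengths_def)
  then have "x = 0 \<or> b \<le> x" using assms(2-4) by (auto simp: cut_points_def)
  then show "b \<le> l \<and> l < 2 * b" using block_lengths_bounds[OF \<open>0 < b\<close>] x(2) by blast
qed

lemma sum_list_pair_block_lengths:
  "mu \<le> L \<Longrightarrow> mv \<le> L \<Longrightarrow> sum_list (pair_block_lengths b L mu mv) = 2 * L"
  by (simp add: pair_block_lengths_def)

lemma length_pair_block_lengths:
  assumes "0 < b" "mu \<le> L" "mv \<le> L"
  shows "length (pair_block_lengths b L mu mv) \<le> 4 * (L div b + 1)"
proof -
  have h: "length (block_lengths b x) \<le> L div b + 1" if "x \<le> L" for x
    using length_block_lengths[OF \<open>0 < b\<close>, of x] div_le_mono[OF that, of b] by simp
  show ?thesis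
    using h[of "L - mu"] h[of mu] h[of "L - mv"] h[of mv] assms by (simp add: pair_block_lengths_def)
qed

lemma exists_cut_point_few_wrap_hits:
  assumes "0 < L" "N \<subseteq> {..<L}"
  shows "\<exists>m\<in>cut_points L b. card (cut_points L b) * card (wrap_hits L n m N) \<le> (n - 1) * card N"
proof -
  let ?Al = "cut_points L b" and ?f = "\<lambda>m. card (wrap_hits L n m N)"
  have "finite ?Al" "?Al \<noteq> {}"
    using finite_subset[OF cut_points_subset] zero_in_cut_points[OF \<open>0 < L\<close>] by auto
  then obtain m where m: "m \<in> ?Al" and avg: "card ?Al * ?f m \<le> sum ?f ?Al"
    using exists_le_average[of ?Al ?f] by blast
  have "sum ?f ?Al \<le> (\<Sum>m<L. ?f m)"
    using cut_points_subset by (intro sum_mono2) auto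
  also have "\<dots> \<le> (n - 1) * card N" using sum_card_wrap_hits_le[OF assms(2)] .
  finally show ?thesis using m avg by (intro bexI[OF _ m]) simp
qed

lemma exists_pair_copy_scheme:
  fixes c d :: "'a list"
  assumes c: "length c = L" and d: "length d = L" and b: "1 \<le> b" "4 * b \<le> n" and "n \<le> L"
  defines "e \<equiv> 2 * L - card (cyclic_window n c ` {..<L} \<union> cyclic_window n d ` {..<L})"
  shows "\<exists>mu\<in>cut_points L b. \<exists>mv\<in>cut_points L b. \<exists>srcs.
    length srcs = length (pair_block_lengths b L mu mv) \<and>
    set srcs \<subseteq> insert None (Some ` {..<2 * L}) \<and>
    copy_scheme_valid (zip (pair_block_lengths b L mu mv) srcs) (rotate mu c @ rotate mv d) \<and>
    card (cut_points L b) * e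
      \<le> card (cut_points L b) * copied_length (zip (pair_block_lengths b L mu mv) srcs) + 2 * (n - 1) * e"
proof -
  define Al where "Al = cut_points L b"
  define M where "M = repeated_positions {..<2 * L} (pair_window n c d)"
  define Mu where "Mu = {p. p < L \<and> p \<in> M}"
  define Mv where "Mv = {p. p < L \<and> L + p \<in> M}"
  have "0 < L" "0 < n" "b \<le> L" using b \<open>n \<le> L\<close> by auto
  have "card M \<le> 2 * e"
    using card_repeated_positions_le[of "{..<2 * L}" "pair_window n c d"] pair_window_image[OF c d]
    by (simp add: M_def e_def)
  moreover have "card Mu + card Mv \<le> card M"
  proof -
    have "card Mu + card Mv = card (Mu \<union> (\<lambda>p. L + p) ` Mv)"
      by (subst card_Un_disjoint) (auto simp: Mu_def Mv_def card_image)
    also have "\<dots> \<le> card M"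
      by (intro card_mono) (auto simp: M_def Mu_def Mv_def repeated_positions_def)
    finally show ?thesis .
  qed
  ultimately have card_Mu_Mv: "card Mu + card Mv \<le> 2 * e" by linarith
  obtain mu where mu: "mu \<in> Al" "card Al * card (wrap_hits L n mu Mu) \<le> (n - 1) * card Mu"
    using exists_cut_point_few_wrap_hits[OF \<open>0 < L\<close>, of Mu] by (auto simp: Mu_def Al_def)
  obtain mv where mv: "mv \<in> Al" "card Al * card (wrap_hits L n mv Mv) \<le> (n - 1) * card Mv"
    using exists_cut_point_few_wrap_hits[OF \<open>0 < L\<close>, of Mv] by (auto simp: Mv_def Al_def)
  define T where "T = rotate mu c @ rotate mv d"
  define P where "P = later_repeats (linear_positions L n) (\<lambda>i. take n (drop i T))"
  define ls where "ls = pair_block_lengths b L mu mv"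
  have deficit: "e \<le> card P + card (wrap_hits L n mu Mu) + card (wrap_hits L n mv Mv)"
    using card_pair_window_deficit[OF c d \<open>0 < L\<close> \<open>0 < n\<close>, of mu mv] pair_window_image[OF c d]
    by (simp add: e_def P_def T_def M_def Mu_def Mv_def)
  have "mu \<le> L" "mv \<le> L" using mu(1) mv(1) by (auto simp: Al_def cut_points_def)
  then have "sum_list ls = length T"
    using c d by (simp add: ls_def T_def sum_list_pair_block_lengths)
  moreover have "\<forall>l\<in>set ls. b \<le> l \<and> l < 2 * b"
    using pair_block_lengths_bounds b \<open>b \<le> L\<close> mu(1) mv(1) by (simp add: ls_def Al_def)
  moreover have "\<forall>i\<in>P. i + n \<le> length T \<and> (\<exists>i'<i. take n (drop i' T) = take n (drop i T))"
    using c d by (auto simp: P_def later_repeats_def linear_positions_def T_def)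
  ultimately obtain srcs where srcs: "length srcs = length ls" "set srcs \<subseteq> insert None (Some ` {..<length T})"
      "copy_scheme_valid (zip ls srcs) T" "card P \<le> copied_length (zip ls srcs)"
    using exists_copy_scheme[of ls T b n P] b by blast
  have "card Al * e \<le> card Al * card P + card Al * card (wrap_hits L n mu Mu) + card Al * card (wrap_hits L n mv Mv)"
    using mult_le_mono2[OF deficit, of "card Al"] by (simp add: algebra_simps)
  also have "\<dots> \<le> card Al * copied_length (zip ls srcs) + (n - 1) * (card Mu + card Mv)"
    using mult_le_mono2[OF srcs(4), of "card Al"] mu(2) mv(2) add_mult_distrib2[of "n - 1" "card Mu" "card Mv"]
    by linarith
  also have "\<dots> \<le> card Al * copied_length (zip ls srcs) + 2 * (n - 1) * e"
    using card_Mu_Mv by simp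
  finally have "card Al * e \<le> card Al * copied_length (zip ls srcs) + 2 * (n - 1) * e" .
  moreover have "length T = 2 * L" using c d by (simp add: T_def)
  ultimately show ?thesis
    using mu(1) mv(1) srcs unfolding Al_def ls_def T_def by auto
qed

section \<open>Encoding pairs of periodic words\<close>

definition periodic_word :: "nat \<Rightarrow> nat \<Rightarrow> 'a list \<Rightarrow> bool" where
  "periodic_word L n u \<longleftrightarrow> length u = L + n \<and> take n u = drop L u"

lemma periodic_word_decomp:
  "periodic_word L n u \<Longrightarrow> n \<le> L \<Longrightarrow> u = take L u @ take n (take L u)"
  unfolding periodic_word_def by (metis append_take_drop_id min.absorb1 take_take)

lemma subwords_periodic_word:
  assumes "periodic_word L n u" "n \<le> L" "0 < L"
  shows "subwords n u = cyclic_window n (take L u) ` {..<L}"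
  using subwords_append_take[of "take L u" L n] periodic_word_decomp[OF assms(1,2)] assms
  by (simp add: periodic_word_def)

definition rotated_pair :: "nat \<Rightarrow> nat \<Rightarrow> nat \<Rightarrow> 'a list \<times> 'a list \<Rightarrow> 'a list" where
  "rotated_pair L mu mv p = rotate mu (take L (fst p)) @ rotate mv (take L (snd p))"

lemma inj_on_rotated_pair:
  assumes "\<And>p. p \<in> Q \<Longrightarrow> periodic_word L n (fst p) \<and> periodic_word L n (snd p)" "n \<le> L"
  shows "inj_on (rotated_pair L mu mv) Q"
proof (rule inj_onI)
  fix p p' assume p: "p \<in> Q" "p' \<in> Q" and eq: "rotated_pair L mu mv p = rotated_pair L mu mv p'"
  have rotate_inj: "rotate m xs = rotate m ys \<Longrightarrow> xs = ys" for m and xs ys :: "'a list"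
    using inj_fn[OF inj_rotate1, of m] unfolding rotate_def by (auto dest: injD)
  have per: "periodic_word L n (fst p)" "periodic_word L n (snd p)"
      "periodic_word L n (fst p')" "periodic_word L n (snd p')"
    using assms(1) p by auto
  then have "length (rotate mu (take L (fst p))) = length (rotate mu (take L (fst p')))"
    by (simp add: periodic_word_def)
  then have "rotate mu (take L (fst p)) = rotate mu (take L (fst p'))"
    "rotate mv (take L (snd p)) = rotate mv (take L (snd p'))"
    using eq by (simp_all add: rotated_pair_def)
  then have "take L (fst p) = take L (fst p')" "take L (snd p) = take L (snd p')"
    using rotate_inj by blast+
  then have "fst p = fst p'" "snd p = snd p'"
    using per periodic_word_decomp[OF _ assms(2)] by metis+
  then show "p = p'" by (simp add: prod_eq_iff)
qed

lemma sum_le_sum_cover: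
  fixes f :: "'p \<Rightarrow> real"
  assumes "finite Q" "finite S" "\<And>p. 0 \<le> f p" "\<And>p. p \<in> Q \<Longrightarrow> \<exists>s\<in>S. R s p"
  shows "(\<Sum>p\<in>Q. f p) \<le> (\<Sum>s\<in>S. \<Sum>p\<in>{p\<in>Q. R s p}. f p)"
proof -
  have "(\<Sum>p\<in>Q. f p) \<le> (\<Sum>p\<in>Q. \<Sum>s\<in>S. if R s p then f p else 0)"
  proof (rule sum_mono)
    fix p assume "p \<in> Q"
    then obtain s where "s \<in> S" "R s p" using assms(4) by blast
    then show "f p \<le> (\<Sum>s\<in>S. if R s p then f p else 0)"
      using assms(2,3) member_le_sum[of s S "\<lambda>s. if R s p then f p else 0"] by simp
  qed
  also have "\<dots> = (\<Sum>s\<in>S. \<Sum>p\<in>{p\<in>Q. R s p}. f p)"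
    using assms(1) by (subst sum.swap) (simp add: sum.inter_filter)
  finally show ?thesis .
qed

definition pair_schemes :: "nat \<Rightarrow> nat \<Rightarrow> ((nat \<times> nat) \<times> nat option list) set" where
  "pair_schemes L b = Sigma (cut_points L b \<times> cut_points L b) (\<lambda>(mu, mv).
     {srcs. set srcs \<subseteq> insert None (Some ` {..<2 * L}) \<and> length srcs = length (pair_block_lengths b L mu mv)})"

lemma finite_pair_schemes: "finite (pair_schemes L b)"
  unfolding pair_schemes_def
  by (intro finite_SigmaI finite_cartesian_product finite_subset[OF cut_points_subset])
    (auto intro: finite_lists_length_eq)

lemma card_pair_schemes_le:
  assumes "0 < b"
  shows "card (pair_schemes L b) \<le> L * L * (2 * L + 1) ^ (4 * (L div b + 1))"
proof -
  define Bs where "Bs = insert None (Some ` {..<2 * L})"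
  have card_Bs: "card Bs = 2 * L + 1" by (simp add: Bs_def card_image)
  have "card (pair_schemes L b) = (\<Sum>(mu, mv)\<in>cut_points L b \<times> cut_points L b.
      card {srcs. set srcs \<subseteq> Bs \<and> length srcs = length (pair_block_lengths b L mu mv)})"
    unfolding pair_schemes_def Bs_def
    by (subst card_SigmaI) (auto intro: finite_subset[OF cut_points_subset] finite_lists_length_eq simp: split_def)
  also have "\<dots> \<le> (\<Sum>(mu, mv)\<in>cut_points L b \<times> cut_points L b. (2 * L + 1) ^ (4 * (L div b + 1)))"
  proof (rule sum_mono, clarify)
    fix mu mv assume "mu \<in> cut_points L b" "mv \<in> cut_points L b"
    then have "length (pair_block_lengths b L mu mv) \<le> 4 * (L div b + 1)"
      using length_pair_block_lengths[OF assms] by (auto simp: cut_points_def)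
    then show "card {srcs. set srcs \<subseteq> Bs \<and> length srcs = length (pair_block_lengths b L mu mv)}
        \<le> (2 * L + 1) ^ (4 * (L div b + 1))"
      using card_lists_length_eq[of Bs] card_Bs by (simp add: Bs_def power_increasing)
  qed
  also have "\<dots> = card (cut_points L b) * card (cut_points L b) * (2 * L + 1) ^ (4 * (L div b + 1))"
    by (simp add: card_cartesian_product)
  also have "\<dots> \<le> L * L * (2 * L + 1) ^ (4 * (L div b + 1))"
    using card_mono[OF _ cut_points_subset, of L b] by (intro mult_right_mono mult_mono) auto
  finally show ?thesis .
qed

lemma power_le_powr_of_bound:
  fixes g :: real and a e c m :: nat
  assumes "0 < g" "g \<le> 1" "0 < a" "a * e \<le> a * c + 2 * m * e"
  shows "g ^ c \<le> g powr (real e * (1 - 2 * real m / real a))"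
proof -
  have "real a * real e \<le> real a * real c + 2 * real m * real e"
    using assms(4) by (metis of_nat_add of_nat_le_iff of_nat_mult of_nat_numeral)
  then have "real e * (1 - 2 * real m / real a) \<le> real c"
    using assms(3) by (simp add: field_simps)
  then have "g powr real c \<le> g powr (real e * (1 - 2 * real m / real a))"
    using assms(1,2) by (intro powr_mono') auto
  then show ?thesis using assms(1) by (simp add: powr_realpow)
qed

definition scheme_blocks :: "nat \<Rightarrow> nat \<Rightarrow> (nat \<times> nat) \<times> nat option list \<Rightarrow> (nat \<times> nat option) list" where
  "scheme_blocks b L s = zip (pair_block_lengths b L (fst (fst s)) (snd (fst s))) (snd s)"

definition encodes_pair :: "nat \<Rightarrow> nat \<Rightarrow> (nat \<times> nat) \<times> nat option list \<Rightarrow> 'a list \<times> 'a list \<Rightarrow> bool" where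
  "encodes_pair b L s p \<longleftrightarrow>
     copy_scheme_valid (scheme_blocks b L s) (rotated_pair L (fst (fst s)) (snd (fst s)) p)"

definition good_pair_schemes :: "nat \<Rightarrow> nat \<Rightarrow> nat \<Rightarrow> nat \<Rightarrow> ((nat \<times> nat) \<times> nat option list) set" where
  "good_pair_schemes L b n e = {s \<in> pair_schemes L b.
     card (cut_points L b) * e \<le> card (cut_points L b) * copied_length (scheme_blocks b L s) + 2 * (n - 1) * e}"

lemma periodic_pair_encoded:
  assumes u: "periodic_word L n u" and v: "periodic_word L n v" and "1 \<le> b" "4 * b \<le> n" "n \<le> L"
  shows "\<exists>s\<in>good_pair_schemes L b n (2 * L - card (subwords n u \<union> subwords n v)). encodes_pair b L s (u, v)"
proof -
  have "0 < L" using assms by linarith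
  have "length (take L u) = L" "length (take L v) = L" using u v by (auto simp: periodic_word_def)
  then obtain mu mv srcs where "mu \<in> cut_points L b" "mv \<in> cut_points L b"
    "length srcs = length (pair_block_lengths b L mu mv)" "set srcs \<subseteq> insert None (Some ` {..<2 * L})"
    "copy_scheme_valid (zip (pair_block_lengths b L mu mv) srcs) (rotate mu (take L u) @ rotate mv (take L v))"
    "card (cut_points L b) * (2 * L - card (subwords n u \<union> subwords n v))
      \<le> card (cut_points L b) * copied_length (zip (pair_block_lengths b L mu mv) srcs)
        + 2 * (n - 1) * (2 * L - card (subwords n u \<union> subwords n v))"
    using exists_pair_copy_scheme[of "take L u" L "take L v" b n] assms
      subwords_periodic_word[OF u \<open>n \<le> L\<close> \<open>0 < L\<close>] subwords_periodic_word[OF v \<open>n \<le> L\<close> \<open>0 < L\<close>]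
    by metis
  then show ?thesis
    by (intro bexI[of _ "((mu, mv), srcs)"])
      (auto simp: good_pair_schemes_def pair_schemes_def scheme_blocks_def encodes_pair_def rotated_pair_def)
qed

section \<open>Numerical estimates\<close>

lemma card_cut_points_ge: "1 \<le> b \<Longrightarrow> 2 * b \<le> L \<Longrightarrow> L - 2 * b + 1 \<le> card (cut_points L b)"
  using card_mono[of "cut_points L b" "{b..L - b}"] finite_subset[OF cut_points_subset]
  by (force simp: cut_points_def)

lemma cut_point_exponent_ge:
  fixes g \<gamma> :: real
  assumes "0 < g" "g < \<gamma>" "\<gamma> < 1" "8 \<le> n"
    and k: "2 * real n \<le> (1 - ln \<gamma> / ln g) * (real k - 2 * real n)"
  shows "2 * n < k" "ln \<gamma> / ln g \<le> 1 - 2 * real (n - 1) / real (card (cut_points (k - n) (n div 4)))"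
proof -
  define c where "c = 1 - ln \<gamma> / ln g"
  define A where "A = real (card (cut_points (k - n) (n div 4)))"
  have "ln g < ln \<gamma>" "ln \<gamma> < 0" using assms by auto
  then have "0 < c" by (simp add: c_def divide_less_eq)
  show "2 * n < k"
  proof (rule ccontr)
    assume "\<not> 2 * n < k"
    then have "c * (real k - 2 * real n) \<le> 0" using \<open>0 < c\<close> by (intro mult_nonneg_nonpos) auto
    then show False using k \<open>8 \<le> n\<close> by (simp add: c_def)
  qed
  moreover have "1 \<le> n div 4" "2 * (n div 4) \<le> n" using \<open>8 \<le> n\<close> by simp_all
  ultimately have "k - 2 * n < card (cut_points (k - n) (n div 4))"
    using card_cut_points_ge[of "n div 4" "k - n"] by linarith
  moreover have "real (k - 2 * n) = real k - 2 * real n" using \<open>2 * n < k\<close> by (simp add: of_nat_diff)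
  ultimately have "real k - 2 * real n \<le> A" "0 < A" unfolding A_def by linarith+
  then have "c * (real k - 2 * real n) \<le> c * A"
    using \<open>0 < c\<close> by (intro mult_left_mono) auto
  then have "2 * real (n - 1) \<le> c * A" using k by (simp add: c_def)
  then have "2 * real (n - 1) / A \<le> c" using \<open>0 < A\<close> by (simp add: pos_divide_le_eq mult.commute)
  then show "ln \<gamma> / ln g \<le> 1 - 2 * real (n - 1) / A" by (simp add: c_def)
qed

lemma powr_le_powr_of_ln_ratio:
  fixes g \<gamma> \<theta> e :: real
  assumes "0 < g" "g < \<gamma>" "\<gamma> < 1" "ln \<gamma> / ln g \<le> \<theta>" "0 \<le> e"
  shows "g powr (e * \<theta>) \<le> \<gamma> powr e"
proof -
  have "ln g < 0" using assms by simp
  then have "\<theta> * ln g \<le> ln \<gamma>"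
    using mult_right_mono_neg[OF assms(4), of "ln g"] by simp
  then have "e * \<theta> * ln g \<le> e * ln \<gamma>" using assms(5) by (simp add: mult.assoc mult_left_mono)
  then show ?thesis using assms(1,2) by (simp add: powr_def)
qed

lemma power_le_powr_power:
  fixes x r :: real
  assumes "1 \<le> x" "real N \<le> real c * r"
  shows "x ^ N \<le> (x ^ c) powr r"
proof -
  have "x ^ N = x powr real N" using assms(1) by (simp add: powr_realpow)
  also have "\<dots> \<le> x powr (real c * r)" using assms by (intro powr_mono) auto
  also have "\<dots> = (x powr real c) powr r" by (simp add: powr_powr)
  also have "\<dots> = (x ^ c) powr r" using assms(1) by (simp add: powr_realpow)
  finally show ?thesis .
qed

text \<open>The number of copy schemes times the quasi-Bernoulli constants is subexponential in k/n
  once k is at most n^2: there are O(k/n) blocks, each with O(n^2) choices.\<close>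

lemma scheme_count_factor_le:
  fixes n k L b :: nat and K \<gamma> :: real
  assumes n: "8 \<le> n" and k: "n \<le> k" "real k \<le> real n ^ 2" and L: "L = k - n" and b: "b = n div 4"
    and "1 \<le> K" "0 < \<gamma>" "\<gamma> \<le> 1"
  shows "real (L * L * (2 * L + 1) ^ (4 * (L div b + 1))) * K ^ (4 + 4 * (L div b + 1)) / \<gamma>\<^sup>2
     \<le> (3 ^ 36 * K ^ 40 / \<gamma>\<^sup>2 * real n ^ 76) powr (real k / real n)"
proof -
  define r where "r = real k / real n"
  define N where "N = 4 * (L div b + 1)"
  have "0 < real n" "1 \<le> r" using n k by (simp_all add: r_def)
  have "real (L div b) \<le> real L / real b" by (rule of_nat_div_le_of_nat)
  also have "\<dots> \<le> real k / (real n / 8)"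
    using n b L \<open>0 < real n\<close> by (intro frac_le) linarith+
  finally have N: "real N \<le> 36 * r" using \<open>1 \<le> r\<close> by (simp add: N_def r_def)
  have "real L \<le> real n ^ 2" using L k(2) by simp
  have "1 \<le> real n" using n by simp
  then have "1 \<le> real n ^ 2" by (rule one_le_power)
  moreover have "real (2 * L + 1) = 2 * real L + 1" "1 \<le> 1 / \<gamma>"
    using assms by (simp_all add: le_divide_eq)
  ultimately have base: "1 \<le> real n" "1 \<le> 3 * real n ^ 2" "real (2 * L + 1) \<le> 3 * real n ^ 2" "1 \<le> 1 / \<gamma>"
    using \<open>1 \<le> real n\<close> \<open>real L \<le> real n ^ 2\<close> by linarith+
  have "real (L * L) \<le> real n ^ 2 * real n ^ 2"
    unfolding of_nat_mult by (rule mult_mono) (use \<open>real L \<le> real n ^ 2\<close> in auto)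
  also have "\<dots> \<le> (real n ^ 4) powr r"
    using base \<open>1 \<le> r\<close> power_le_powr_power[of "real n" 4 4 r] by (simp flip: power_add)
  finally have factor1: "real (L * L) \<le> (real n ^ 4) powr r" .
  have "real ((2 * L + 1) ^ N) \<le> (3 * real n ^ 2) ^ N"
    unfolding of_nat_power by (rule power_mono) (use base in auto)
  also have "\<dots> \<le> ((3 * real n ^ 2) ^ 36) powr r"
    using base N by (intro power_le_powr_power) auto
  finally have factor2: "real ((2 * L + 1) ^ N) \<le> ((3 * real n ^ 2) ^ 36) powr r" .
  have factor3: "K ^ (4 + N) \<le> (K ^ 40) powr r"
    using \<open>1 \<le> K\<close> N \<open>1 \<le> r\<close> by (intro power_le_powr_power) auto
  have factor4: "(1 / \<gamma>) ^ 2 \<le> ((1 / \<gamma>) ^ 2) powr r"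
    using base \<open>1 \<le> r\<close> by (intro power_le_powr_power) auto
  have "real (L * L) * real ((2 * L + 1) ^ N) * K ^ (4 + N) * (1 / \<gamma>) ^ 2
      \<le> (real n ^ 4) powr r * ((3 * real n ^ 2) ^ 36) powr r * (K ^ 40) powr r * ((1 / \<gamma>) ^ 2) powr r"
    using factor1 factor2 factor3 factor4 \<open>1 \<le> K\<close> by (intro mult_mono) auto
  also have "\<dots> = (real n ^ 4 * (3 * real n ^ 2) ^ 36 * K ^ 40 * (1 / \<gamma>) ^ 2) powr r"
    using \<open>0 < real n\<close> \<open>1 \<le> K\<close> by (simp add: powr_mult del: of_nat_power)
  also have "real n ^ 4 * (3 * real n ^ 2) ^ 36 * K ^ 40 * (1 / \<gamma>) ^ 2 = 3 ^ 36 * K ^ 40 / \<gamma>\<^sup>2 * real n ^ 76"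
    by (simp add: power_mult_distrib field_simps flip: power_mult power_add)
  finally show ?thesis by (simp add: r_def N_def power_divide)
qed

section \<open>Quasi-multiplicative weights\<close>

locale word_weight =
  fixes w :: "'a::finite list \<Rightarrow> real" and K g :: real and n1 :: nat
  assumes nonneg: "w x \<ge> 0"
    and sum_length_le_1: "(\<Sum>x\<in>{x. length x = m}. w x) \<le> 1"
    and quasi_mult: "w (x @ y) \<le> K * w x * w y"
    and K_ge_1: "K \<ge> 1"
    and decay: "n1 \<le> length x \<Longrightarrow> w x \<le> g ^ length x"
    and g_pos: "0 < g" and g_le_1: "g \<le> 1"
begin

lemma finite_lists_length [simp]: "finite {x::'a list. length x = m}"
  using finite_lists_length_eq[of "UNIV :: 'a set" m] by simp

lemma weight_Nil: "w [] \<le> 1"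
  using sum_length_le_1[of 0] by simp

lemma prod_list_nonneg_weights: "prod_list (map w xs) \<ge> 0"
  by (rule prod_list_nonneg) (auto simp: nonneg)

lemma sum_copy_extensions_le:
  assumes "n1 \<le> l"
  shows "(\<Sum>T'\<in>{T'. length T' = l}. if extends_by_copy T q T' then w T' else 0) \<le> g ^ l"
proof -
  let ?S = "{T'\<in>{T'. length T' = l}. extends_by_copy T q T'}"
  have "(\<Sum>T'\<in>{T'. length T' = l}. if extends_by_copy T q T' then w T' else 0) = (\<Sum>T'\<in>?S. w T')"
    using sum.inter_filter[of "{T'. length T' = l}" w "extends_by_copy T q", symmetric] by simp
  also have "\<dots> \<le> g ^ l"
  proof (cases "?S = {}")
    case False
    then obtain T0 where T0: "T0 \<in> ?S" by blast
    have "?S = {T0}"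
    proof (intro equalityI subsetI)
      fix T' assume "T' \<in> ?S"
      with T0 show "T' \<in> {T0}" using extends_by_copy_unique[of T q T' T0] by simp
    qed (use T0 in simp)
    moreover have "length T0 = l" using T0 by simp
    ultimately show ?thesis using decay[of T0] assms by simp
  next
    case True
    then have "(\<Sum>T'\<in>?S. w T') = 0" by (simp only: sum.empty)
    then show ?thesis using g_pos by simp
  qed
  finally show ?thesis .
qed

lemma copy_scheme_weight_le:
  assumes "\<forall>(l, src)\<in>set bl. src \<noteq> None \<longrightarrow> n1 \<le> l"
  shows "(\<Sum>T\<in>{T. length T = sum_list (map fst bl)}.
       if copy_scheme_valid bl T then prod_list (map w (split_blocks (map fst bl) T)) else 0)
     \<le> g ^ copied_length bl"
  using assms
proof (induction bl rule: rev_induct)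
  case Nil
  have "{T::'a list. length T = 0} = {[]}" by auto
  then show ?case by (simp add: copy_scheme_valid_def copied_length_def)
next
  case (snoc x bl)
  obtain l src where x: "x = (l, src)" by fastforce
  define m where "m = sum_list (map fst bl)"
  define F where "F T = (if copy_scheme_valid bl T then prod_list (map w (split_blocks (map fst bl) T)) else 0)"
    for T :: "'a list"
  define c where "c = (if src = None then 1 else g ^ l)"
  define ok where "ok T T' \<longleftrightarrow> (\<forall>q. src = Some q \<longrightarrow> extends_by_copy T q T')" for T T' :: "'a list"
  have F_nonneg: "F T \<ge> 0" for T
    by (simp add: F_def prod_list_nonneg_weights)
  have step: "(\<Sum>T'\<in>{T'. length T' = l}. if ok T T' then w T' else 0) \<le> c" for T
  proof (cases src)
    case None
    then show ?thesis using sum_length_le_1[of l] by (simp add: ok_def c_def)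
  next
    case (Some q)
    then show ?thesis
      using sum_copy_extensions_le[of l T q] snoc.prems x by (simp add: ok_def c_def)
  qed
  define G where "G T = (if copy_scheme_valid (bl @ [(l, src)]) T
      then prod_list (map w (split_blocks (map fst (bl @ [(l, src)])) T)) else 0)" for T
  have split: "G (T @ T') = F T * (if ok T T' then w T' else 0)"
    if "length T = m" "length T' = l" for T T'
    using that copy_scheme_valid_snoc[of T bl T' l src]
    by (auto simp: G_def F_def ok_def m_def split_blocks_append)
  have "(\<Sum>T\<in>{T. length T = m + l}. G T) = (\<Sum>T\<in>{T. length T = m}. \<Sum>T'\<in>{T'. length T' = l}. G (T @ T'))"
    by (rule sum_lists_length_add)
  also have "\<dots> = (\<Sum>T\<in>{T. length T = m}. \<Sum>T'\<in>{T'. length T' = l}. F T * (if ok T T' then w T' else 0))"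
    by (intro sum.cong refl) (simp add: split)
  also have "\<dots> \<le> (\<Sum>T\<in>{T. length T = m}. F T * c)"
    unfolding sum_distrib_left[symmetric]
    by (intro sum_mono mult_left_mono step F_nonneg)
  also have "\<dots> = (\<Sum>T\<in>{T. length T = m}. F T) * c"
    by (simp add: sum_distrib_right)
  also have "\<dots> \<le> g ^ copied_length bl * c"
    using snoc g_pos by (intro mult_right_mono) (auto simp: c_def F_def m_def)
  also have "\<dots> = g ^ copied_length (bl @ [x])"
    by (simp add: c_def copied_length_def x power_add)
  finally show ?case unfolding x by (simp add: G_def m_def)
qed

lemma weight_concat_le: "w (concat xs) \<le> K ^ length xs * prod_list (map w xs)"
proof (induction xs)
  case (Cons x xs)
  have "w (concat (x # xs)) \<le> K * w x * w (concat xs)" using quasi_mult by simp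
  also have "\<dots> \<le> K * w x * (K ^ length xs * prod_list (map w xs))"
    using Cons K_ge_1 nonneg by (intro mult_left_mono) auto
  finally show ?case by (simp add: algebra_simps)
qed (simp add: weight_Nil)

lemma weight_blocks_le:
  "length x = sum_list ls \<Longrightarrow> w x \<le> K ^ length ls * prod_list (map w (split_blocks ls x))"
  using weight_concat_le[of "split_blocks ls x"] concat_split_blocks[of x ls] by simp

lemma weight_rotation_blocks_le:
  assumes c: "length c = L" and mu: "mu < L"
    and ls: "sum_list ls1 = L - mu" "sum_list ls2 = mu"
  shows "w (c @ p) \<le> K ^ (2 + length ls1 + length ls2) * w p *
    prod_list (map w (split_blocks (ls1 @ ls2) (rotate mu c)))"
proof -
  define P1 where "P1 = prod_list (map w (split_blocks ls1 (drop mu c)))"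
  define P2 where "P2 = prod_list (map w (split_blocks ls2 (take mu c)))"
  have P: "0 \<le> P1" "0 \<le> P2" by (simp_all add: P1_def P2_def prod_list_nonneg_weights)
  have K: "0 \<le> K" using K_ge_1 by simp
  have w1: "w (drop mu c) \<le> K ^ length ls1 * P1"
    using weight_blocks_le[of "drop mu c" ls1] c ls by (simp add: P1_def)
  have w2: "w (take mu c) \<le> K ^ length ls2 * P2"
    using weight_blocks_le[of "take mu c" ls2] c mu ls by (simp add: P2_def)
  have "w (c @ p) \<le> K * w c * w p" by (rule quasi_mult)
  also have "w c \<le> K * w (take mu c) * w (drop mu c)"
    using quasi_mult[of "take mu c" "drop mu c"] by simp
  also have "\<dots> \<le> K * (K ^ length ls2 * P2) * (K ^ length ls1 * P1)"
    using w1 w2 K P nonneg by (intro mult_mono) auto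
  finally have "w (c @ p) \<le> K * (K * (K ^ length ls2 * P2) * (K ^ length ls1 * P1)) * w p"
    using K nonneg by (simp add: mult_left_mono mult_right_mono)
  also have "\<dots> = K ^ (2 + length ls1 + length ls2) * w p * (P1 * P2)"
    by (simp add: power_add algebra_simps power2_eq_square)
  also have "P1 * P2 = prod_list (map w (split_blocks (ls1 @ ls2) (rotate mu c)))"
    using c mu ls(1) by (simp add: P1_def P2_def rotate_drop_take split_blocks_append)
  finally show ?thesis .
qed

lemma weight_periodic_word_le:
  assumes u: "periodic_word L n u" "w (take n u) \<le> E" and "n \<le> L" "m < L"
  shows "w u \<le> K ^ (2 + length (block_lengths b (L - m) @ block_lengths b m)) * E *
    prod_list (map w (split_blocks (block_lengths b (L - m) @ block_lengths b m) (rotate m (take L u))))"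
proof -
  have "w u = w (take L u @ take n u)"
    using periodic_word_decomp[OF u(1) \<open>n \<le> L\<close>] \<open>n \<le> L\<close> by (metis min.absorb1 take_take)
  also have "\<dots> \<le> K ^ (2 + length (block_lengths b (L - m)) + length (block_lengths b m)) * w (take n u) *
      prod_list (map w (split_blocks (block_lengths b (L - m) @ block_lengths b m) (rotate m (take L u))))"
    using assms by (intro weight_rotation_blocks_le) (auto simp: periodic_word_def)
  also have "\<dots> \<le> K ^ (2 + length (block_lengths b (L - m)) + length (block_lengths b m)) * E *
      prod_list (map w (split_blocks (block_lengths b (L - m) @ block_lengths b m) (rotate m (take L u))))"
    using u K_ge_1 by (intro mult_right_mono mult_left_mono prod_list_nonneg_weights) auto
  finally show ?thesis by (simp add: add.assoc)
qed

lemma sum_pairs_with_scheme_le: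
  assumes Q: "\<And>u v. (u, v) \<in> Q \<Longrightarrow>
      periodic_word L n u \<and> periodic_word L n v \<and> w (take n u) \<le> E \<and> w (take n v) \<le> E"
    and "n \<le> L" "0 < b" "n1 \<le> b" "b \<le> L" "0 \<le> E"
    and cuts: "mu \<in> cut_points L b" "mv \<in> cut_points L b"
    and srcs: "length srcs = length (pair_block_lengths b L mu mv)"
  defines "bl \<equiv> zip (pair_block_lengths b L mu mv) srcs"
  shows "(\<Sum>p\<in>{p\<in>Q. copy_scheme_valid bl (rotated_pair L mu mv p)}. w (fst p) * w (snd p))
    \<le> K ^ (4 + length (pair_block_lengths b L mu mv)) * E\<^sup>2 * g ^ copied_length bl"
proof -
  define ls where "ls = pair_block_lengths b L mu mv"
  define lu where "lu = block_lengths b (L - mu) @ block_lengths b mu"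
  define lv where "lv = block_lengths b (L - mv) @ block_lengths b mv"
  define F where "F T = (if copy_scheme_valid bl T then prod_list (map w (split_blocks ls T)) else 0)" for T
  define S where "S = {p\<in>Q. copy_scheme_valid bl (rotated_pair L mu mv p)}"
  have "mu < L" "mv < L" using cuts by (auto simp: cut_points_def)
  have ls: "ls = lu @ lv" by (simp add: ls_def lu_def lv_def pair_block_lengths_def)
  have map_fst: "map fst bl = ls" using srcs by (simp add: bl_def ls_def)
  have F_nonneg: "0 \<le> F T" for T by (simp add: F_def prod_list_nonneg_weights)
  have K: "0 \<le> K" using K_ge_1 by simp
  have pair_le: "w (fst p) * w (snd p) \<le> K ^ (4 + length ls) * E\<^sup>2 * F (rotated_pair L mu mv p)"
    if "p \<in> S" for p
  proof -
    obtain u v where p: "p = (u, v)" by fastforce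
    define Pu where "Pu = prod_list (map w (split_blocks lu (rotate mu (take L u))))"
    define Pv where "Pv = prod_list (map w (split_blocks lv (rotate mv (take L v))))"
    have uv: "(u, v) \<in> Q" "copy_scheme_valid bl (rotated_pair L mu mv (u, v))"
      using that p by (auto simp: S_def)
    then have "length (rotate mu (take L u)) = sum_list lu"
      using Q \<open>mu < L\<close> by (simp add: periodic_word_def lu_def)
    then have F: "F (rotated_pair L mu mv p) = Pu * Pv"
      using uv by (simp add: F_def p rotated_pair_def ls split_blocks_append Pu_def Pv_def)
    have "w u * w v \<le> (K ^ (2 + length lu) * E * Pu) * (K ^ (2 + length lv) * E * Pv)"
      using weight_periodic_word_le[where u = u and m = mu and b = b]
        weight_periodic_word_le[where u = v and m = mv and b = b]
        Q[OF uv(1)] \<open>n \<le> L\<close> \<open>mu < L\<close> \<open>mv < L\<close> nonneg K \<open>0 \<le> E\<close> prod_list_nonneg_weights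
      by (intro mult_mono) (auto simp: lu_def lv_def Pu_def Pv_def)
    also have "\<dots> = K ^ (4 + length ls) * E\<^sup>2 * (Pu * Pv)"
      by (simp add: ls power_add power2_eq_square algebra_simps eval_nat_numeral)
    finally show ?thesis using F p by simp
  qed
  have "(\<Sum>p\<in>S. w (fst p) * w (snd p)) \<le> (\<Sum>p\<in>S. K ^ (4 + length ls) * E\<^sup>2 * F (rotated_pair L mu mv p))"
    by (intro sum_mono pair_le)
  also have "\<dots> = K ^ (4 + length ls) * E\<^sup>2 * (\<Sum>T\<in>rotated_pair L mu mv ` S. F T)"
    using inj_on_rotated_pair[of Q L n mu mv] Q \<open>n \<le> L\<close>
    by (subst sum.reindex) (auto simp: sum_distrib_left S_def intro: inj_on_subset)
  also have "(\<Sum>T\<in>rotated_pair L mu mv ` S. F T) \<le> (\<Sum>T\<in>{T. length T = sum_list (map fst bl)}. F T)"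
    using Q \<open>mu < L\<close> \<open>mv < L\<close> F_nonneg
    by (intro sum_mono2) (auto simp: map_fst ls_def S_def rotated_pair_def periodic_word_def
        sum_list_pair_block_lengths)
  also have "\<dots> \<le> g ^ copied_length bl"
  proof -
    have "\<forall>(l, src)\<in>set bl. src \<noteq> None \<longrightarrow> n1 \<le> l"
      using pair_block_lengths_bounds[OF \<open>0 < b\<close> \<open>b \<le> L\<close> cuts] \<open>n1 \<le> b\<close>
      by (auto simp: bl_def dest!: set_zip_leftD)
    from copy_scheme_weight_le[OF this] show ?thesis unfolding F_def map_fst .
  qed
  finally show ?thesis
    using K by (simp add: S_def ls_def mult_left_mono)
qed

lemma sum_pairs_good_scheme_le:
  assumes Q: "\<And>u v. (u, v) \<in> Q \<Longrightarrow>
      periodic_word L n u \<and> periodic_word L n v \<and> w (take n u) \<le> E \<and> w (take n v) \<le> E"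
    and b: "1 \<le> b" "4 * b \<le> n" "n1 \<le> b" and "n \<le> L" "0 \<le> E"
    and s: "s \<in> good_pair_schemes L b n e"
  shows "(\<Sum>p\<in>{p\<in>Q. encodes_pair b L s p}. w (fst p) * w (snd p))
    \<le> K ^ (4 + 4 * (L div b + 1)) * E\<^sup>2 * g powr (real e * (1 - 2 * real (n - 1) / real (card (cut_points L b))))"
proof -
  obtain mu mv srcs where s_eq: "s = ((mu, mv), srcs)" by (metis prod.collapse)
  have cuts: "mu \<in> cut_points L b" "mv \<in> cut_points L b"
    and srcs: "length srcs = length (pair_block_lengths b L mu mv)"
    and credit: "card (cut_points L b) * e
      \<le> card (cut_points L b) * copied_length (scheme_blocks b L s) + 2 * (n - 1) * e"
    using s by (auto simp: good_pair_schemes_def pair_schemes_def s_eq)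
  have "0 < L" "0 < b" "b \<le> L" using b \<open>n \<le> L\<close> by linarith+
  have "0 < card (cut_points L b)"
    using zero_in_cut_points[OF \<open>0 < L\<close>] finite_subset[OF cut_points_subset] by (auto simp: card_gt_0_iff)
  have "length (pair_block_lengths b L mu mv) \<le> 4 * (L div b + 1)"
    using length_pair_block_lengths[OF \<open>0 < b\<close>] cuts by (auto simp: cut_points_def)
  then have "K ^ (4 + length (pair_block_lengths b L mu mv)) \<le> K ^ (4 + 4 * (L div b + 1))"
    using K_ge_1 by (intro power_increasing) auto
  moreover have "g ^ copied_length (scheme_blocks b L s)
      \<le> g powr (real e * (1 - 2 * real (n - 1) / real (card (cut_points L b))))"
    using power_le_powr_of_bound[OF g_pos g_le_1 \<open>0 < card (cut_points L b)\<close> credit] .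
  moreover have "(\<Sum>p\<in>{p\<in>Q. encodes_pair b L s p}. w (fst p) * w (snd p))
      \<le> K ^ (4 + length (pair_block_lengths b L mu mv)) * E\<^sup>2 * g ^ copied_length (scheme_blocks b L s)"
    using sum_pairs_with_scheme_le[OF _ \<open>n \<le> L\<close> \<open>0 < b\<close> \<open>n1 \<le> b\<close> \<open>b \<le> L\<close> \<open>0 \<le> E\<close> cuts srcs] Q
    by (simp add: encodes_pair_def scheme_blocks_def s_eq)
  ultimately show ?thesis
    using g_pos K_ge_1 by (smt (verit) mult_mono mult_nonneg_nonneg zero_le_power zero_le_power2)
qed

lemma sum_pairs_weight_le:
  assumes Q: "\<And>u v. (u, v) \<in> Q \<Longrightarrow> periodic_word L n u \<and> periodic_word L n v \<and>
      w (take n u) \<le> E \<and> w (take n v) \<le> E \<and> card (subwords n u \<union> subwords n v) = j"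
    and b: "1 \<le> b" "4 * b \<le> n" "n1 \<le> b" and "n \<le> L" "0 \<le> E"
  shows "(\<Sum>p\<in>Q. w (fst p) * w (snd p)) \<le> real (L * L * (2 * L + 1) ^ (4 * (L div b + 1))) *
      K ^ (4 + 4 * (L div b + 1)) * E\<^sup>2 *
      g powr (real (2 * L - j) * (1 - 2 * real (n - 1) / real (card (cut_points L b))))"
proof -
  define S where "S = good_pair_schemes L b n (2 * L - j)"
  define bound where "bound = K ^ (4 + 4 * (L div b + 1)) * E\<^sup>2 *
      g powr (real (2 * L - j) * (1 - 2 * real (n - 1) / real (card (cut_points L b))))"
  have "Q \<subseteq> {u. length u = L + n} \<times> {v. length v = L + n}"
    using Q by (auto simp: periodic_word_def)
  then have "finite Q" using finite_subset by fastforce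
  have "finite S" using finite_pair_schemes finite_subset by (auto simp: S_def good_pair_schemes_def)
  have "(\<Sum>p\<in>Q. w (fst p) * w (snd p)) \<le> (\<Sum>s\<in>S. \<Sum>p\<in>{p\<in>Q. encodes_pair b L s p}. w (fst p) * w (snd p))"
    using \<open>finite Q\<close> \<open>finite S\<close> nonneg periodic_pair_encoded[OF _ _ b(1,2) \<open>n \<le> L\<close>] Q
    by (intro sum_le_sum_cover) (force simp: S_def)+
  also have "\<dots> \<le> (\<Sum>s\<in>S. bound)"
  proof (rule sum_mono)
    fix s assume "s \<in> S"
    then show "(\<Sum>p\<in>{p\<in>Q. encodes_pair b L s p}. w (fst p) * w (snd p)) \<le> bound"
      unfolding bound_def S_def
      by (intro sum_pairs_good_scheme_le) (use Q b \<open>n \<le> L\<close> \<open>0 \<le> E\<close> in auto)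
  qed
  also have "\<dots> = real (card S) * bound" by simp
  also have "\<dots> \<le> real (L * L * (2 * L + 1) ^ (4 * (L div b + 1))) * bound"
  proof (rule mult_right_mono)
    have "card S \<le> card (pair_schemes L b)"
      using finite_pair_schemes by (intro card_mono) (auto simp: S_def good_pair_schemes_def)
    also have "\<dots> \<le> L * L * (2 * L + 1) ^ (4 * (L div b + 1))"
      using card_pair_schemes_le b by simp
    finally show "real (card S) \<le> real (L * L * (2 * L + 1) ^ (4 * (L div b + 1)))"
      by (simp only: of_nat_le_iff)
    show "0 \<le> bound" using K_ge_1 by (simp add: bound_def)
  qed
  finally show ?thesis by (simp add: bound_def mult.assoc)
qed

lemma sum_pairs_weight_le_powr:
  assumes Q: "\<And>u v. (u, v) \<in> Q \<Longrightarrow> periodic_word (k - n) n u \<and> periodic_word (k - n) n v \<and>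
      w (take n u) \<le> E \<and> w (take n v) \<le> E \<and> card (subwords n u \<union> subwords n v) = j"
    and \<gamma>: "g < \<gamma>" "\<gamma> < 1" and n: "8 \<le> n" "4 * n1 \<le> n"
    and k: "2 * real n \<le> (1 - ln \<gamma> / ln g) * (real k - 2 * real n)" "real k \<le> real n ^ 2"
    and "0 \<le> E"
  shows "(\<Sum>p\<in>Q. w (fst p) * w (snd p))
    \<le> (3 ^ 36 * K ^ 40 / \<gamma>\<^sup>2 * real n ^ 76) powr (real k / real n) * E\<^sup>2 * \<gamma> ^ (2 * (k - n + 1) - j)"
proof -
  define L where "L = k - n"
  define b where "b = n div 4"
  define e where "e = 2 * L - j"
  define \<theta> where "\<theta> = 1 - 2 * real (n - 1) / real (card (cut_points L b))"
  define count where "count = real (L * L * (2 * L + 1) ^ (4 * (L div b + 1))) * K ^ (4 + 4 * (L div b + 1))"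
  have b: "1 \<le> b" "4 * b \<le> n" "n1 \<le> b" using n by (auto simp: b_def)
  have "2 * n < k" "ln \<gamma> / ln g \<le> \<theta>"
    using cut_point_exponent_ge[OF g_pos \<gamma> n(1) k(1)] by (simp_all add: \<theta>_def L_def b_def)
  then have "n \<le> L" by (simp add: L_def)
  from \<open>ln \<gamma> / ln g \<le> \<theta>\<close> have "g powr (real e * \<theta>) \<le> \<gamma> powr real e"
    by (rule powr_le_powr_of_ln_ratio[OF g_pos \<gamma>]) simp
  then have g_powr: "g powr (real e * \<theta>) \<le> \<gamma> ^ e"
    using g_pos \<gamma> by (simp add: powr_realpow)
  have count: "count / \<gamma>\<^sup>2 \<le> (3 ^ 36 * K ^ 40 / \<gamma>\<^sup>2 * real n ^ 76) powr (real k / real n)"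
    using scheme_count_factor_le[OF n(1) _ k(2) L_def b_def K_ge_1, of \<gamma>] \<open>2 * n < k\<close> g_pos \<gamma>
    by (simp add: count_def)
  have "\<gamma> ^ e * \<gamma>\<^sup>2 = \<gamma> ^ (e + 2)" by (rule power_add[symmetric])
  also have "\<dots> \<le> \<gamma> ^ (2 * (k - n + 1) - j)"
    using g_pos \<gamma> by (intro power_decreasing) (auto simp: e_def L_def)
  finally have \<gamma>_powers: "\<gamma> ^ e * \<gamma>\<^sup>2 \<le> \<gamma> ^ (2 * (k - n + 1) - j)" .
  have "(\<Sum>p\<in>Q. w (fst p) * w (snd p)) \<le> count * E\<^sup>2 * g powr (real e * \<theta>)"
    unfolding count_def e_def \<theta>_def
    by (rule sum_pairs_weight_le) (use Q b \<open>n \<le> L\<close> \<open>0 \<le> E\<close> in \<open>auto simp: L_def\<close>)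
  also have "\<dots> \<le> count * E\<^sup>2 * \<gamma> ^ e"
    using g_powr K_ge_1 by (intro mult_left_mono) (auto simp: count_def)
  also have "\<dots> = count / \<gamma>\<^sup>2 * E\<^sup>2 * (\<gamma> ^ e * \<gamma>\<^sup>2)"
    using g_pos \<gamma> by (simp add: field_simps)
  also have "\<dots> \<le> (3 ^ 36 * K ^ 40 / \<gamma>\<^sup>2 * real n ^ 76) powr (real k / real n) * E\<^sup>2 * \<gamma> ^ (2 * (k - n + 1) - j)"
    using count \<gamma>_powers g_pos \<gamma> K_ge_1
    by (intro mult_mono) (auto simp: count_def)
  finally show ?thesis .
qed

end

section \<open>Gibbs measures\<close>

lemma length_lang: "u \<in> lang X m \<Longrightarrow> length u = m"
  by (auto simp: lang_def word_at_def)

lemma cylinder_in_sets: "shift_invariant_prob X \<mu> \<Longrightarrow> cyl X w \<in> sets \<mu>"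
  unfolding shift_invariant_prob_def cyl_sets_def
  by (auto intro!: sigma_sets.Basic exI[of _ 0] simp: cyl_def cyl_at_def)

lemma cp_outside_language: "w \<notin> lang_all X \<Longrightarrow> cp \<mu> X w = 0"
  unfolding cp_def lang_all_def lang_def cyl_def
  by (metis (mono_tags, lifting) UNIV_I UN_I empty_Collect_eq measure_empty mem_Collect_eq)

lemma sum_cp_length_le_1:
  assumes "shift_invariant_prob X \<mu>"
  shows "(\<Sum>w\<in>{w::'a::finite list. length w = m}. cp \<mu> X w) \<le> 1"
proof -
  interpret prob_space \<mu> using assms by (simp add: shift_invariant_prob_def)
  have "finite {w::'a list. length w = m}"
    using finite_lists_length_eq[of "UNIV :: 'a set" m] by simp
  moreover have "disjoint_family_on (cyl X) {w::'a list. length w = m}"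
    by (auto simp: disjoint_family_on_def cyl_def)
  ultimately have "(\<Sum>w\<in>{w::'a list. length w = m}. cp \<mu> X w) = measure \<mu> (\<Union>w\<in>{w. length w = m}. cyl X w)"
    unfolding cp_def using cylinder_in_sets[OF assms]
    by (intro finite_measure_finite_Union[symmetric]) auto
  also have "\<dots> \<le> 1" by (rule prob_le_1)
  finally show ?thesis .
qed

lemma word_weight_cp:
  fixes X :: "(int \<Rightarrow> 'a::finite) set"
  assumes "shift_invariant_prob X \<mu>" "1 \<le> K" "0 < g" "g \<le> 1"
    and quasi_mult: "\<And>u v. u @ v \<in> lang_all X \<Longrightarrow> cp \<mu> X (u @ v) \<le> K * cp \<mu> X u * cp \<mu> X v"
    and decay: "\<forall>u\<in>lang_all X. n1 \<le> length u \<longrightarrow> cp \<mu> X u \<le> g ^ length u"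
  shows "word_weight (cp \<mu> X) K g n1"
proof
  show "cp \<mu> X (u @ v) \<le> K * cp \<mu> X u * cp \<mu> X v" for u v
    using quasi_mult[of u v] cp_outside_language[of "u @ v" X \<mu>] \<open>1 \<le> K\<close>
    by (cases "u @ v \<in> lang_all X") (auto simp: cp_def)
  show "cp \<mu> X u \<le> g ^ length u" if "n1 \<le> length u" for u
    using decay that cp_outside_language[of u X \<mu>] \<open>0 < g\<close> by (cases "u \<in> lang_all X") auto
qed (use assms sum_cp_length_le_1 in \<open>auto simp: cp_def\<close>)

text \<open>A Gibbs measure charges every cylinder, so a rate bound for long words forces the rate
  to be positive (test it on a word of odd length).\<close>

lemma gibbs_decay_rate_pos:
  assumes "x \<in> X" "0 < K"
    and gibbs: "\<forall>m\<ge>1. \<forall>x\<in>X. inverse K \<le> cp \<mu> X (word_at x 0 m) / exp (- P * real m + birkhoff f m x)"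
    and decay: "\<forall>u\<in>lang_all X. n0 \<le> length u \<longrightarrow> cp \<mu> X u \<le> \<gamma> ^ length u"
  shows "0 < \<gamma>"
proof -
  define m where "m = 2 * n0 + 1"
  define u where "u = word_at x 0 m"
  have "inverse K \<le> cp \<mu> X u / exp (- P * real m + birkhoff f m x)"
    using gibbs[rule_format, of m x] \<open>x \<in> X\<close> by (simp add: u_def m_def)
  moreover have "0 < inverse K" using \<open>0 < K\<close> by simp
  ultimately have "0 < cp \<mu> X u / exp (- P * real m + birkhoff f m x)" by linarith
  then have "0 < cp \<mu> X u" by (simp add: zero_less_divide_iff)
  moreover have "u \<in> lang_all X" using \<open>x \<in> X\<close> by (auto simp: lang_all_def lang_def u_def)
  moreover have "length u = m" by (simp add: u_def word_at_def)
  ultimately have "cp \<mu> X u \<le> \<gamma> ^ m" using decay[rule_format, of u] by (simp add: m_def)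
  then have "0 < \<gamma> * \<gamma> ^ (2 * n0)" using \<open>0 < cp \<mu> X u\<close> by (simp add: m_def)
  moreover have "0 \<le> \<gamma> ^ (2 * n0)" by (simp add: zero_le_even_power)
  ultimately show ?thesis by (metis leI mult_nonpos_nonneg not_less)
qed

lemma exists_decay_rate_below:
  assumes "gamma0 X \<mu> < \<gamma>" "0 < \<gamma>"
    and decay: "\<forall>u\<in>lang_all X. n0 \<le> length u \<longrightarrow> cp \<mu> X u \<le> \<gamma> ^ length u"
  obtains g n1 where "0 < g" "g < \<gamma>" "\<forall>u\<in>lang_all X. n1 \<le> length u \<longrightarrow> cp \<mu> X u \<le> g ^ length u"
proof -
  define S where "S = {g::real. g > 0 \<and> (\<exists>n0. \<forall>m\<ge>n0. \<forall>u\<in>lang X m. cp \<mu> X u \<le> g ^ m)}"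
  have lang: "u \<in> lang X m \<longleftrightarrow> u \<in> lang_all X \<and> length u = m" for u m
    using length_lang by (auto simp: lang_all_def)
  have "\<gamma> \<in> S" using decay \<open>0 < \<gamma>\<close> by (auto simp: S_def lang intro!: exI[of _ n0])
  moreover have "Inf S < \<gamma>" using assms(1) by (simp add: gamma0_def S_def)
  ultimately obtain g where "g \<in> S" "g < \<gamma>" using cInf_lessD[of S \<gamma>] by blast
  then obtain n1 where "0 < g" "\<forall>m\<ge>n1. \<forall>u\<in>lang X m. cp \<mu> X u \<le> g ^ m" by (auto simp: S_def)
  then have "\<forall>u\<in>lang_all X. n1 \<le> length u \<longrightarrow> cp \<mu> X u \<le> g ^ length u" by (auto simp: lang)
  then show ?thesis using that \<open>0 < g\<close> \<open>g < \<gamma>\<close> by blast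
qed

lemma gibbs_word_weight:
  fixes X :: "(int \<Rightarrow> 'a::finite) set"
  assumes "gibbs_measure X f \<mu>" "x \<in> X" "1 < K"
    and gibbs: "\<forall>m\<ge>1. \<forall>x\<in>X.
        inverse K \<le> cp \<mu> X (word_at x 0 m) / exp (- pressure X f * real m + birkhoff f m x)"
    and quasi_mult: "\<forall>u v. u @ v \<in> lang_all X \<longrightarrow> cp \<mu> X (u @ v) \<le> K * cp \<mu> X u * cp \<mu> X v"
    and "gamma0 X \<mu> < \<gamma>" "\<gamma> < 1"
    and decay: "\<forall>u\<in>lang_all X. n0 \<le> length u \<longrightarrow> cp \<mu> X u \<le> \<gamma> ^ length u"
  obtains g n1 where "g < \<gamma>" "word_weight (cp \<mu> X) K g n1"
proof -
  have "0 < \<gamma>" using gibbs_decay_rate_pos[OF \<open>x \<in> X\<close> _ gibbs decay] \<open>1 < K\<close> by simp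
  then obtain g n1 where g: "0 < g" "g < \<gamma>"
    and "\<forall>u\<in>lang_all X. n1 \<le> length u \<longrightarrow> cp \<mu> X u \<le> g ^ length u"
    using exists_decay_rate_below[OF \<open>gamma0 X \<mu> < \<gamma>\<close> _ decay] by blast
  then have "word_weight (cp \<mu> X) K g n1"
    using assms(1,3,7) quasi_mult
    by (intro word_weight_cp) (auto simp: gibbs_measure_def)
  then show ?thesis using that g by blast
qed

lemma cp_le_of_E_set:
  assumes "u \<in> E_set X \<mu> \<delta> n" "1 \<le> n"
  shows "cp \<mu> X u \<le> exp (- real n * (ks_entropy X \<mu> - \<delta>))"
proof (cases "cp \<mu> X u = 0")
  case False
  then have "0 < cp \<mu> X u" by (simp add: cp_def less_le)
  have "ks_entropy X \<mu> - \<delta> < - (1 / real n) * ln (cp \<mu> X u)"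
    using assms(1) by (simp add: E_set_def abs_less_iff)
  then have "ln (cp \<mu> X u) < - real n * (ks_entropy X \<mu> - \<delta>)"
    using assms(2) by (simp add: field_simps)
  then show ?thesis using \<open>0 < cp \<mu> X u\<close> by (metis exp_le_cancel_iff exp_ln less_imp_le)
qed simp

lemma Qj_set_pair:
  assumes "(u, v) \<in> Qj_set X \<mu> \<delta> n k j" "1 \<le> n"
  shows "n \<le> k \<and> periodic_word (k - n) n u \<and> periodic_word (k - n) n v \<and>
    cp \<mu> X (take n u) \<le> exp (- real n * (ks_entropy X \<mu> - \<delta>)) \<and>
    cp \<mu> X (take n v) \<le> exp (- real n * (ks_entropy X \<mu> - \<delta>)) \<and>
    card (subwords n u \<union> subwords n v) = j"
proof -
  have G: "u \<in> G_set X \<mu> \<delta> n k" "v \<in> G_set X \<mu> \<delta> n k"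
    and card: "card (subwords n u \<union> subwords n v) = j"
    using assms(1) by (auto simp: Qj_set_def Q_set_def)
  have "u \<in> lang X k" "v \<in> lang X k" "take n u \<in> lang X n" using G by (auto simp: G_set_def E_set_def)
  then have length: "length u = k" "length v = k" "length (take n u) = n"
    using length_lang by blast+
  then have "n \<le> k" by simp
  moreover have "take n u = drop (k - n) u" "take n v = drop (k - n) v"
    using G by (auto simp: G_set_def)
  moreover have "take n u \<in> E_set X \<mu> \<delta> n" "take n v \<in> E_set X \<mu> \<delta> n"
    using G by (auto simp: G_set_def)
  then have "cp \<mu> X (take n u) \<le> exp (- real n * (ks_entropy X \<mu> - \<delta>))"
    "cp \<mu> X (take n v) \<le> exp (- real n * (ks_entropy X \<mu> - \<delta>))"
    using cp_le_of_E_set assms(2) by blast+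
  ultimately show ?thesis using length card by (simp add: periodic_word_def)
qed

lemma eventually_le_square_of_smallo:
  fixes k :: "nat \<Rightarrow> real"
  assumes "k \<in> o(\<lambda>n. real n ^ 2 / ln (real n))"
  shows "eventually (\<lambda>n. k n \<le> real n ^ 2) sequentially"
proof -
  have "eventually (\<lambda>n. norm (k n) \<le> 1 * norm (real n ^ 2 / ln (real n))) sequentially"
    using landau_o.smallD[OF assms, of 1] by simp
  moreover have "eventually (\<lambda>n. 3 \<le> n) sequentially" by (rule eventually_ge_at_top)
  ultimately show ?thesis
  proof eventually_elim
    case (elim n)
    have "exp 1 \<le> real n" using exp_le elim(2) by linarith
    then have "1 \<le> ln (real n)" using elim(2) by (simp add: ln_ge_iff)
    then have "k n \<le> real n ^ 2 / ln (real n)" using elim(1) by simp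
    also have "\<dots> \<le> real n ^ 2" using \<open>1 \<le> ln (real n)\<close> by (simp add: divide_le_eq mult_le_cancel_left1)
    finally show ?case .
  qed
qed

lemma prodmeas_Qj_set_le:
  fixes X :: "(int \<Rightarrow> 'a::finite) set"
  assumes "word_weight (cp \<mu> X) K g n1" and \<gamma>: "g < \<gamma>" "\<gamma> < 1" and n: "8 \<le> n" "4 * n1 \<le> n"
    and k: "real n / real k < (1 - ln \<gamma> / ln g) / (2 * (1 - ln \<gamma> / ln g) + 2)" "real k \<le> real n ^ 2"
  shows "prodmeas \<mu> X (Qj_set X \<mu> \<delta> n k j)
    \<le> (3 ^ 36 * K ^ 40 / \<gamma>\<^sup>2 * real n ^ 76) powr (real k / real n)
       * exp (- 2 * real n * (ks_entropy X \<mu> - \<delta>)) * \<gamma> ^ (2 * (k - n + 1) - j)"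
proof -
  interpret word_weight "cp \<mu> X" K g n1 by fact
  define c where "c = 1 - ln \<gamma> / ln g"
  define E where "E = exp (- real n * (ks_entropy X \<mu> - \<delta>))"
  have "ln g < ln \<gamma>" "ln \<gamma> < 0" using g_pos \<gamma> by auto
  then have "0 < c" by (simp add: c_def divide_less_eq)
  show ?thesis
  proof (cases "k = 0")
    case True
    then have "Qj_set X \<mu> \<delta> n k j = {}" using Qj_set_pair[of _ _ X \<mu> \<delta> n k j] n by fastforce
    then show ?thesis using g_pos \<gamma> K_ge_1 by (simp add: prodmeas_def)
  next
    case False
    have "real n / real k < c / (2 * c + 2)" using k(1) by (simp add: c_def)
    then have "real n < c / (2 * c + 2) * real k" using False by (simp add: divide_less_eq)
    then have "(2 * c + 2) * real n < c * real k" using \<open>0 < c\<close> by (simp add: field_simps)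
    then have "2 * real n \<le> c * (real k - 2 * real n)" by (simp add: algebra_simps)
    have "prodmeas \<mu> X (Qj_set X \<mu> \<delta> n k j) = (\<Sum>p\<in>Qj_set X \<mu> \<delta> n k j. cp \<mu> X (fst p) * cp \<mu> X (snd p))"
      by (simp add: prodmeas_def split_def)
    also have "\<dots> \<le> (3 ^ 36 * K ^ 40 / \<gamma>\<^sup>2 * real n ^ 76) powr (real k / real n) * E\<^sup>2 * \<gamma> ^ (2 * (k - n + 1) - j)"
      using \<open>2 * real n \<le> c * (real k - 2 * real n)\<close> Qj_set_pair[of _ _ X \<mu> \<delta> n k j] \<gamma> n k(2)
      by (intro sum_pairs_weight_le_powr) (auto simp: c_def E_def)
    also have "E\<^sup>2 = exp (- 2 * real n * (ks_entropy X \<mu> - \<delta>))"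
      by (simp add: E_def power2_eq_square flip: exp_add)
    finally show ?thesis .
  qed
qed

theorem mainTheorem10:
  fixes X :: "(int \<Rightarrow> 'a::finite) set" and f :: "(int \<Rightarrow> 'a) \<Rightarrow> real"
    and \<mu> :: "(int \<Rightarrow> 'a) measure" and K \<alpha> \<gamma> \<delta> :: real
    and n0 :: nat and k :: "nat \<Rightarrow> nat"
  assumes sft: "is_sft X" and mixing: "topologically_mixing X"
    and nontrivial: "\<exists>x\<in>X. \<exists>y\<in>X. x \<noteq> y"
    and hoelder: "holder X f"
    and gibbs: "gibbs_measure X f \<mu>"
    and K_gt: "K > 1"
    and K_gibbs: "\<forall>m\<ge>1. \<forall>x\<in>X.
        inverse K \<le> cp \<mu> X (word_at x 0 m) / exp (- pressure X f * real m + birkhoff f m x) \<and>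
        cp \<mu> X (word_at x 0 m) / exp (- pressure X f * real m + birkhoff f m x) \<le> K"
    and K_qb: "\<forall>u v. u @ v \<in> lang_all X \<longrightarrow>
        cp \<mu> X (u @ v) \<le> K * cp \<mu> X u * cp \<mu> X v \<and>
        cp \<mu> X (u @ v) / cp \<mu> X u \<le> K * cp \<mu> X v"
    and alpha: "gamma0 X \<mu> < \<alpha>" "\<alpha> \<le> 1"
    and gamma: "gamma0 X \<mu> < \<gamma>" "\<gamma> < \<alpha>"
    and n0: "\<forall>u\<in>lang_all X. length u \<ge> n0 \<longrightarrow> cp \<mu> X u \<le> \<gamma> ^ length u"
    and delta: "0 < \<delta>" "\<delta> < ln (\<alpha> / \<gamma>) / 4"
    and k1: "(\<lambda>n. real n / real (k n)) \<longlonglongrightarrow> 0"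
    and k2: "(\<lambda>n. real (k n)) \<in> o(\<lambda>n. real n ^ 2 / ln (real n))"
  shows "\<exists>p :: real poly. \<exists>N. \<forall>n\<ge>N. poly p (real n) > 0 \<and>
    (\<forall>j. 1 \<le> j \<and> j \<le> 2 * (k n - n + 1) \<longrightarrow>
      prodmeas \<mu> X (Qj_set X \<mu> \<delta> n (k n) j)
        \<le> poly p (real n) powr (real (k n) / real n)
           * exp (- 2 * real n * (ks_entropy X \<mu> - \<delta>))
           * \<gamma> ^ (2 * (k n - n + 1) - j))"
proof -
  obtain x where "x \<in> X" using nontrivial by blast
  have "\<gamma> < 1" using gamma(2) alpha(2) by simp
  obtain g n1 where "g < \<gamma>" and weight: "word_weight (cp \<mu> X) K g n1"
    using gibbs_word_weight[OF gibbs \<open>x \<in> X\<close> K_gt _ _ gamma(1) \<open>\<gamma> < 1\<close> n0] K_gibbs K_qb by blast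
  interpret word_weight "cp \<mu> X" K g n1 by (rule weight)
  define c where "c = 1 - ln \<gamma> / ln g"
  have "0 < c" using g_pos \<open>g < \<gamma>\<close> \<open>\<gamma> < 1\<close> by (simp add: c_def divide_less_eq)
  have "eventually (\<lambda>n. 8 + 4 * n1 \<le> n \<and> real n / real (k n) < c / (2 * c + 2) \<and> real (k n) \<le> real n ^ 2)
      sequentially"
    using eventually_ge_at_top order_tendstoD(2)[OF k1] eventually_le_square_of_smallo[OF k2] \<open>0 < c\<close>
    by (simp add: eventually_conj_iff)
  then obtain N where N: "\<And>n. N \<le> n \<Longrightarrow>
      8 + 4 * n1 \<le> n \<and> real n / real (k n) < c / (2 * c + 2) \<and> real (k n) \<le> real n ^ 2"
    unfolding eventually_sequentially by blast
  define A where "A = 3 ^ 36 * K ^ 40 / \<gamma>\<^sup>2"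
  have "0 < A" using K_gt g_pos \<open>g < \<gamma>\<close> by (simp add: A_def)
  show ?thesis
  proof (intro exI[of _ "monom A 76"] exI[of _ N] allI impI conjI)
    fix n j assume "N \<le> n"
    then show "0 < poly (monom A 76) (real n)" using N[of n] \<open>0 < A\<close> by (simp add: poly_monom)
    show "prodmeas \<mu> X (Qj_set X \<mu> \<delta> n (k n) j) \<le> poly (monom A 76) (real n) powr (real (k n) / real n)
        * exp (- 2 * real n * (ks_entropy X \<mu> - \<delta>)) * \<gamma> ^ (2 * (k n - n + 1) - j)"
      using prodmeas_Qj_set_le[OF weight \<open>g < \<gamma>\<close> \<open>\<gamma> < 1\<close>] N[OF \<open>N \<le> n\<close>]
      by (simp add: poly_monom A_def c_def)
  qed
qed

end
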